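(* Let $G=(V,E)$ be a connected graph, let $T$ be a spanning tree of $G$ rooted at $s$ which is an $\mathcal L$-tree of some DFS on $G$, and let $\rho$ be an arbitrary vertex order of $V$ ending in $s$. Let $\sigma$ be the order output by Ordering$(G,T,s,\rho)$. Then $T$ is an $\mathcal L$-tree of LexDFS rooted in $s$ if and only if $\sigma$ is a LexDFS order of $G$.
   Context: Graphs are finite, simple, undirected; $n=|V|$, $N(v)$ is the neighborhood of $v$. A vertex order is a linear order $\sigma=(v_1,\dots,v_n)$ of $V$; $\sigma(i)=v_i$; $u\prec_\sigma v$ means $u$ appears before $v$; $\sigma^-$ is the reverse order. DFS: a search that starts at a vertex and repeatedly visits an unvisited neighbor of the most recently visited vertex that still has an unvisited neighbor; a DFS order is any resulting order. DFS$^+(\tau)$ on a graph $H$: the DFS of $H$ starting at the last vertex of $\tau$ that, whenever several vertices may be visited next, visits the one rightmost in $\tau$. LexDFS started at $s$: label $s$ with $(0)$, all others with the empty label; for $i=1,\dots,n$ pick an unnumbered vertex $v$ with lexicographically largest label, set $\sigma(i)=v$, and prepend $i$ to the label of each unnumbered neighbor of $v$; a LexDFS order is any possible output. $\mathcal L$-tree of a vertex order $(v_1,\dots,v_n)$ of a connected graph: the spanning tree rooted at $v_1$ with an edge from each $v_i$ ($i>1$) to its rightmost neighbor $v_j$ with $j<i$. A rooted spanning tree $T$ (root $s$) is an $\mathcal L$-tree of a search $\mathcal P$ on $G$ if some $\mathcal P$-order of $G$ starting at $s$ has $\mathcal L$-tree $T$ (same edges and same root). Partition refinement: refining an ordered partition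 $(Q_1,\dots,Q_k)$ of $V$ with $S'\subseteq V$ replaces each $Q_i$ by $(Q_i\cap S',\,Q_i\setminus S')$ whenever both are nonempty. Procedure Ordering$(G,T,s,\rho)$: let $\beta$ be the reverse of a BFS order of $T$ starting at $s$; set $\mathcal Q=(V)$; for $i=1,\dots,n$, with $v=\beta(i)$, refine $\mathcal Q$ with $\{w\in N(v): w\prec_\beta v\}$; then order the vertices inside each class of $\mathcal Q$ according to $\rho^-$ and move the class $\{s\}$ to the leftmost position; let $\tau$ be the reverse of the resulting order of all vertices; output $\sigma=$ DFS$^+(\tau)$ on $T$. *)

theory Defs
  imports Main
begin

definition graph :: "'a set \<Rightarrow> ('a \<Rightarrow> 'a \<Rightarrow> bool) \<Rightarrow> bool" where
  "graph V E \<longleftrightarrow> finite V \<and> (\<forall>x y. E x y \<longrightarrow> x \<in> V \<and> y \<in> V \<and> x \<noteq> y \<and> E y x)"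

definition connected :: "'a set \<Rightarrow> ('a \<Rightarrow> 'a \<Rightarrow> bool) \<Rightarrow> bool" where
  "connected V E \<longleftrightarrow> (\<forall>x\<in>V. \<forall>y\<in>V. (x, y) \<in> {(a, b). E a b}\<^sup>*)"

definition is_vorder :: "'a set \<Rightarrow> 'a list \<Rightarrow> bool" where
  "is_vorder V \<sigma> \<longleftrightarrow> distinct \<sigma> \<and> set \<sigma> = V"

definition prec :: "'a list \<Rightarrow> 'a \<Rightarrow> 'a \<Rightarrow> bool" where
  "prec xs x y \<longleftrightarrow> (\<exists>i j. i < j \<and> j < length xs \<and> xs ! i = x \<and> xs ! j = y)"

text \<open>DFS order starting at s: each vertex after the first is an unvisited neighbour of the
  most recently visited vertex that still has an unvisited neighbour.\<close>

definition dfs_order :: "'a set \<Rightarrow> ('a \<Rightarrow> 'a \<Rightarrow> bool) \<Rightarrow> 'a \<Rightarrow> 'a list \<Rightarrow> bool" where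
  "dfs_order V E s \<sigma> \<longleftrightarrow> is_vorder V \<sigma> \<and> \<sigma> \<noteq> [] \<and> hd \<sigma> = s \<and>
     (\<forall>i. 0 < i \<and> i < length \<sigma> \<longrightarrow>
        (\<exists>j<i. E (\<sigma> ! j) (\<sigma> ! i) \<and>
           (\<forall>k. j < k \<and> k < i \<longrightarrow> {w. E (\<sigma> ! k) w} \<subseteq> set (take i \<sigma>))))"

text \<open>BFS order starting at s: each vertex after the first is an unvisited neighbour of the
  earliest visited vertex that still has an unvisited neighbour.\<close>

definition bfs_order :: "'a set \<Rightarrow> ('a \<Rightarrow> 'a \<Rightarrow> bool) \<Rightarrow> 'a \<Rightarrow> 'a list \<Rightarrow> bool" where
  "bfs_order V E s \<sigma> \<longleftrightarrow> is_vorder V \<sigma> \<and> \<sigma> \<noteq> [] \<and> hd \<sigma> = s \<and>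
     (\<forall>i. 0 < i \<and> i < length \<sigma> \<longrightarrow>
        (\<exists>j<i. E (\<sigma> ! j) (\<sigma> ! i) \<and>
           (\<forall>k. k < j \<longrightarrow> {w. E (\<sigma> ! k) w} \<subseteq> set (take i \<sigma>))))"

text \<open>DFS+(tau) on the graph (V,E): the DFS started at the last vertex of tau which, among all
  candidates (unvisited neighbours of the current vertex), visits the one rightmost in tau.\<close>

definition dfs_plus :: "'a set \<Rightarrow> ('a \<Rightarrow> 'a \<Rightarrow> bool) \<Rightarrow> 'a list \<Rightarrow> 'a list \<Rightarrow> bool" where
  "dfs_plus V E \<tau> \<sigma> \<longleftrightarrow> \<tau> \<noteq> [] \<and> dfs_order V E (last \<tau>) \<sigma> \<and>
     (\<forall>i j w. 0 < i \<and> i < length \<sigma> \<and> j < i \<and> E (\<sigma> ! j) (\<sigma> ! i) \<and>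
        (\<forall>k. j < k \<and> k < i \<longrightarrow> {w. E (\<sigma> ! k) w} \<subseteq> set (take i \<sigma>)) \<and>
        E (\<sigma> ! j) w \<and> w \<notin> set (take i \<sigma>)
        \<longrightarrow> w = \<sigma> ! i \<or> prec \<tau> w (\<sigma> ! i))"

text \<open>Position p (0-based) of the list carries the number p+1. The label of v just before
  the (i+1)-th vertex is chosen is the list of numbers of its already numbered neighbours, the
  latest first (each new number is prepended), with the initial entry 0 for the start vertex s.\<close>

definition lex_label :: "('a \<Rightarrow> 'a \<Rightarrow> bool) \<Rightarrow> 'a \<Rightarrow> 'a list \<Rightarrow> nat \<Rightarrow> 'a \<Rightarrow> nat list" where
  "lex_label E s \<sigma> i v =
     rev (map Suc (filter (\<lambda>p. E (\<sigma> ! p) v) [0..<i])) @ (if v = s then [0] else [])"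

definition lexdfs_order :: "'a set \<Rightarrow> ('a \<Rightarrow> 'a \<Rightarrow> bool) \<Rightarrow> 'a \<Rightarrow> 'a list \<Rightarrow> bool" where
  "lexdfs_order V E s \<sigma> \<longleftrightarrow> is_vorder V \<sigma> \<and>
     (\<forall>i < length \<sigma>. \<forall>w \<in> V - set (take i \<sigma>).
        (lex_label E s \<sigma> i (\<sigma> ! i), lex_label E s \<sigma> i w) \<notin> lexord {(a, b). a < (b::nat)})"

definition ltree_edge :: "('a \<Rightarrow> 'a \<Rightarrow> bool) \<Rightarrow> 'a list \<Rightarrow> 'a \<Rightarrow> 'a \<Rightarrow> bool" where
  "ltree_edge E \<sigma> x y \<longleftrightarrow> (\<exists>i < length \<sigma>. \<exists>j < i.
      ((x = \<sigma> ! i \<and> y = \<sigma> ! j) \<or> (x = \<sigma> ! j \<and> y = \<sigma> ! i)) \<and>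
      E (\<sigma> ! i) (\<sigma> ! j) \<and> (\<forall>k. j < k \<and> k < i \<longrightarrow> \<not> E (\<sigma> ! i) (\<sigma> ! k)))"

definition is_Ltree_DFS :: "'a set \<Rightarrow> ('a \<Rightarrow> 'a \<Rightarrow> bool) \<Rightarrow> ('a \<Rightarrow> 'a \<Rightarrow> bool) \<Rightarrow> 'a \<Rightarrow> bool" where
  "is_Ltree_DFS V E TE s \<longleftrightarrow> (\<exists>\<sigma>. dfs_order V E s \<sigma> \<and> ltree_edge E \<sigma> = TE)"

definition is_Ltree_LexDFS :: "'a set \<Rightarrow> ('a \<Rightarrow> 'a \<Rightarrow> bool) \<Rightarrow> ('a \<Rightarrow> 'a \<Rightarrow> bool) \<Rightarrow> 'a \<Rightarrow> bool" where
  "is_Ltree_LexDFS V E TE s \<longleftrightarrow> (\<exists>\<sigma>. lexdfs_order V E s \<sigma> \<and> ltree_edge E \<sigma> = TE)"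

definition refine :: "'a set list \<Rightarrow> 'a set \<Rightarrow> 'a set list" where
  "refine Qs S = concat (map (\<lambda>Q. if Q \<inter> S \<noteq> {} \<and> Q - S \<noteq> {} then [Q \<inter> S, Q - S] else [Q]) Qs)"

definition ordering_classes :: "'a set \<Rightarrow> ('a \<Rightarrow> 'a \<Rightarrow> bool) \<Rightarrow> 'a list \<Rightarrow> 'a set list" where
  "ordering_classes V E \<beta> = foldl (\<lambda>Qs v. refine Qs {w. E v w \<and> prec \<beta> w v}) [V] \<beta>"

definition ordering_seq :: "'a set \<Rightarrow> ('a \<Rightarrow> 'a \<Rightarrow> bool) \<Rightarrow> 'a \<Rightarrow> 'a list \<Rightarrow> 'a list \<Rightarrow> 'a list" where
  "ordering_seq V E s \<rho> \<beta> =
     (let Qs = ordering_classes V E \<beta>;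
          Qs' = filter (\<lambda>Q. s \<in> Q) Qs @ filter (\<lambda>Q. s \<notin> Q) Qs
      in concat (map (\<lambda>Q. filter (\<lambda>x. x \<in> Q) (rev \<rho>)) Qs'))"

definition ordering_output :: "'a set \<Rightarrow> ('a \<Rightarrow> 'a \<Rightarrow> bool) \<Rightarrow> ('a \<Rightarrow> 'a \<Rightarrow> bool) \<Rightarrow> 'a \<Rightarrow> 'a list \<Rightarrow> 'a list \<Rightarrow> bool" where
  "ordering_output V E TE s \<rho> \<sigma> \<longleftrightarrow>
     (\<exists>\<beta>. bfs_order V TE s (rev \<beta>) \<and> dfs_plus V TE (rev (ordering_seq V E s \<rho> \<beta>)) \<sigma>)"

end

theory Submission
  imports Defs
begin

text \<open>
  Since \<open>TE\<close> is the L-tree of a DFS, it is a normal spanning tree: every edge joins a vertex to a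
  descendant. Hence in every order in which a graph search can traverse \<open>TE\<close> from \<open>s\<close> the parent
  of a vertex is its rightmost earlier neighbour, so all these orders have L-tree \<open>TE\<close>; as \<open>\<sigma>\<close> is a
  DFS order of \<open>TE\<close>, this settles one direction.

  Conversely, let \<open>\<pi>\<close> be a LexDFS order with L-tree \<open>TE\<close>. When \<open>\<sigma>\<close> visits a child \<open>c\<close> of \<open>p\<close>,
  the numbered neighbours of the unnumbered vertices all lie on the tree path from \<open>s\<close> to \<open>p\<close>, so
  their LexDFS labels compare by the deepest vertex on that path adjacent to exactly one of them.
  A vertex in the subtree of a sibling that \<open>\<pi>\<close> visits after \<open>c\<close> cannot win this comparison,
  because \<open>\<pi>\<close> itself chose \<open>c\<close> while that subtree was unvisited. The partition refinement of
  Ordering sorts siblings by the same comparison and DFS+ follows that order, so no sibling of \<open>c\<close>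
  beats \<open>c\<close> either; hence every step of \<open>\<sigma>\<close> is a LexDFS step.
\<close>

lemma in_set_take_iff: "x \<in> set (take i xs) \<longleftrightarrow> (\<exists>k<i. k < length xs \<and> xs ! k = x)"
  by (auto simp: in_set_conv_nth)

lemma nth_notin_set_take: "distinct xs \<Longrightarrow> i \<le> j \<Longrightarrow> j < length xs \<Longrightarrow> xs ! j \<notin> set (take i xs)"
  by (auto simp: in_set_take_iff nth_eq_iff_index_eq)

lemma prec_in_set: "prec xs x y \<Longrightarrow> x \<in> set xs \<and> y \<in> set xs"
  by (auto simp: prec_def)

lemma prec_rev: "prec (rev xs) x y \<longleftrightarrow> prec xs y x"
proof -
  have "prec (rev xs) x y" if yx: "prec xs y x" for xs :: "'a list" and x y
  proof -
    obtain i j where "i < j" "j < length xs" "xs ! i = y" "xs ! j = x"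
      using yx by (auto simp: prec_def)
    then show ?thesis
      unfolding prec_def by (intro exI[of _ "length xs - Suc j"] exI[of _ "length xs - Suc i"]) (auto simp: rev_nth)
  qed
  then show ?thesis by (metis rev_rev_ident)
qed

lemma prec_nth_iff:
  "distinct xs \<Longrightarrow> i < length xs \<Longrightarrow> j < length xs \<Longrightarrow> prec xs (xs ! i) (xs ! j) \<longleftrightarrow> i < j"
  unfolding prec_def using nth_eq_iff_index_eq by fastforce

lemma prec_asym: "distinct xs \<Longrightarrow> prec xs x y \<Longrightarrow> \<not> prec xs y x"
  unfolding prec_def using nth_eq_iff_index_eq by fastforce

lemma prec_appendD:
  assumes "prec (A @ B) x y"
  shows "prec A x y \<or> (x \<in> set A \<and> y \<in> set B) \<or> prec B x y"
proof -
  obtain i j where ij: "i < j" "j < length (A @ B)" "(A @ B) ! i = x" "(A @ B) ! j = y"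
    using assms by (auto simp: prec_def)
  consider "j < length A" | "i < length A" "length A \<le> j" | "length A \<le> i" by linarith
  then show ?thesis
  proof cases
    case 1
    then have "prec A x y" using ij unfolding prec_def by (auto simp: nth_append)
    then show ?thesis ..
  next
    case 2
    then show ?thesis using ij by (auto simp: nth_append)
  next
    case 3
    then have "prec B x y"
      using ij unfolding prec_def by (intro exI[of _ "i - length A"] exI[of _ "j - length A"]) (auto simp: nth_append)
    then show ?thesis by simp
  qed
qed

lemma the_inv_into_nth:
  assumes "distinct xs"
  shows "i < length xs \<Longrightarrow> the_inv_into {..<length xs} ((!) xs) (xs ! i) = i"
    and "v \<in> set xs \<Longrightarrow> the_inv_into {..<length xs} ((!) xs) v < length xs \<and>
      xs ! the_inv_into {..<length xs} ((!) xs) v = v"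
proof -
  have inj: "inj_on ((!) xs) {..<length xs}" using inj_on_nth[OF assms] by simp
  show "i < length xs \<Longrightarrow> the_inv_into {..<length xs} ((!) xs) (xs ! i) = i"
    using the_inv_into_f_f[OF inj] by simp
  have "(!) xs ` {..<length xs} = set xs" by (auto simp: set_conv_nth)
  then show "v \<in> set xs \<Longrightarrow> the_inv_into {..<length xs} ((!) xs) v < length xs \<and>
      xs ! the_inv_into {..<length xs} ((!) xs) v = v"
    using the_inv_into_into[OF inj, of v] f_the_inv_into_f[OF inj, of v] by auto
qed

lemma GreatestI_less_nat:
  assumes "j < (i::nat)" "P j"
  shows "(GREATEST j. j < i \<and> P j) < i" "P (GREATEST j. j < i \<and> P j)"
    and "j' < i \<Longrightarrow> P j' \<Longrightarrow> j' \<le> (GREATEST j. j < i \<and> P j)"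
proof -
  have bound: "\<And>j. j < i \<and> P j \<Longrightarrow> j \<le> i" by simp
  show "(GREATEST j. j < i \<and> P j) < i" "P (GREATEST j. j < i \<and> P j)"
    using GreatestI_nat[of "\<lambda>j. j < i \<and> P j" j i] assms bound by blast+
  show "j' < i \<Longrightarrow> P j' \<Longrightarrow> j' \<le> (GREATEST j. j < i \<and> P j)"
    using Greatest_le_nat[of "\<lambda>j. j < i \<and> P j" j' i] bound by blast
qed

section \<open>LexDFS labels\<close>

abbreviation label_less :: "(nat list \<times> nat list) set" where
  "label_less \<equiv> lexord {(a, b). a < b}"

lemma label_less_irrefl: "(xs, xs) \<notin> label_less"
  by (simp add: lexord_irreflexive)

lemma label_less_asym: "(xs, ys) \<in> label_less \<Longrightarrow> (ys, xs) \<notin> label_less"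
  by (rule lexord_asymmetric) (auto intro: asymI)

lemma label_not_less_trans:
  assumes "(xs, ys) \<notin> label_less" "(ys, zs) \<notin> label_less"
  shows "(xs, zs) \<notin> label_less"
proof
  assume "(xs, zs) \<in> label_less"
  have "(ys, xs) \<in> label_less \<or> ys = xs"
    using assms(1) lexord_linear[of "{(a, b). a < (b::nat)}" xs ys] by (auto simp: less_linear)
  then have "(ys, zs) \<in> label_less"
    using \<open>(xs, zs) \<in> label_less\<close> lexord_trans[of ys xs] by (auto simp: trans_def)
  then show False using assms(2) by simp
qed

text \<open>LexDFS labels list neighbour numbers latest first, so two labels compare at the latest step
  that numbered a neighbour of exactly one of the two vertices.\<close>

lemma lexord_rev_Suc_filter_iff:
  "(rev (map Suc (filter P [0..<i])), rev (map Suc (filter Q [0..<i]))) \<in> label_less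
   \<longleftrightarrow> (\<exists>k<i. Q k \<and> \<not> P k \<and> (\<forall>m. k < m \<and> m < i \<longrightarrow> (P m \<longleftrightarrow> Q m)))"
  (is "?less i \<longleftrightarrow> ?diff i")
proof (induction i)
  case 0
  show ?case by simp
next
  case (Suc i)
  have below: "\<forall>a\<in>set (rev (map Suc (filter R [0..<i]))). a < Suc i" for R by auto
  consider "P i = Q i" | "P i" "\<not> Q i" | "\<not> P i" "Q i" by blast
  then show ?case
  proof cases
    case 1
    then have "?diff (Suc i) \<longleftrightarrow> ?diff i"
      by (metis (no_types, lifting) less_Suc_eq)
    then show ?thesis using Suc.IH 1 by auto
  next
    case 2
    have "\<not> ?less (Suc i)"
      using 2 below[of Q] by (cases "rev (map Suc (filter Q [0..<i]))") auto
    moreover have "\<not> ?diff (Suc i)"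
      using 2 by (metis less_Suc_eq)
    ultimately show ?thesis by blast
  next
    case 3
    have "?less (Suc i)"
      using 3 below[of P] by (cases "rev (map Suc (filter P [0..<i]))") auto
    moreover have "?diff (Suc i)"
      using 3 by (intro exI[of _ i]) auto
    ultimately show ?thesis by blast
  qed
qed

lemma lex_label_less_iff:
  assumes "x \<noteq> s" "y \<noteq> s"
  shows "(lex_label E s \<omega> i y, lex_label E s \<omega> i x) \<in> label_less \<longleftrightarrow>
    (\<exists>k<i. E (\<omega> ! k) x \<and> \<not> E (\<omega> ! k) y \<and> (\<forall>m. k < m \<and> m < i \<longrightarrow> (E (\<omega> ! m) y \<longleftrightarrow> E (\<omega> ! m) x)))"
  using lexord_rev_Suc_filter_iff[of "\<lambda>k. E (\<omega> ! k) y" i "\<lambda>k. E (\<omega> ! k) x"] assms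
  by (simp add: lex_label_def)

lemma lex_label_first: "\<omega> ! 0 \<noteq> s \<Longrightarrow> (lex_label E s \<omega> 0 (\<omega> ! 0), lex_label E s \<omega> 0 s) \<in> label_less"
  by (simp add: lex_label_def)

lemma lexdfs_order_nth_0:
  assumes "lexdfs_order V E s \<sigma>" "s \<in> V"
  shows "\<sigma> \<noteq> [] \<and> \<sigma> ! 0 = s"
proof -
  have "\<sigma> \<noteq> []" using assms unfolding lexdfs_order_def is_vorder_def by auto
  moreover have "\<sigma> ! 0 = s"
    using assms \<open>\<sigma> \<noteq> []\<close> lex_label_first[of \<sigma> s E] unfolding lexdfs_order_def by auto
  ultimately show ?thesis ..
qed

section \<open>Ordered partition refinement\<close>

definition class_index :: "'a set list \<Rightarrow> 'a \<Rightarrow> nat" where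
  "class_index Qs x = length (takeWhile (\<lambda>Q. x \<notin> Q) Qs)"

definition class_count :: "'a set list \<Rightarrow> 'a \<Rightarrow> nat" where
  "class_count Qs x = length (filter (\<lambda>Q. x \<in> Q) Qs)"

lemma class_index_Cons: "class_index (Q # Qs) x = (if x \<in> Q then 0 else Suc (class_index Qs x))"
  by (simp add: class_index_def)

lemma class_index_append:
  "class_index (Qs @ Qs') x = (if x \<in> \<Union>(set Qs) then class_index Qs x else length Qs + class_index Qs' x)"
  by (induction Qs) (auto simp: class_index_Cons class_index_def)

lemma class_index_less: "x \<in> \<Union>(set Qs) \<Longrightarrow> class_index Qs x < length Qs"
  by (induction Qs) (auto simp: class_index_Cons)

lemma class_index_nth:
  assumes "class_count Qs x \<le> 1" "k < length Qs" "x \<in> Qs ! k"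
  shows "class_index Qs x = k"
  using assms
proof (induction Qs arbitrary: k)
  case Nil
  then show ?case by simp
next
  case (Cons Q Qs)
  show ?case
  proof (cases k)
    case 0
    then show ?thesis using Cons.prems by (simp add: class_index_Cons)
  next
    case (Suc k')
    then have "x \<in> Qs ! k'" "k' < length Qs" using Cons.prems by auto
    then have "x \<in> \<Union>(set Qs)" by auto
    then have "x \<notin> Q" using Cons.prems(1) by (auto simp: class_count_def filter_empty_conv)
    then show ?thesis
      using Cons.IH[of k'] Cons.prems(1) Suc \<open>x \<in> Qs ! k'\<close> \<open>k' < length Qs\<close>
      by (simp add: class_index_Cons class_count_def)
  qed
qed

lemma class_count_filter_append:
  "class_count (filter P Qs @ filter (\<lambda>Q. \<not> P Q) Qs) x = class_count Qs x"
  unfolding class_count_def by (induction Qs) auto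

lemma class_index_filter_less:
  assumes "\<forall>Q\<in>set Qs. y \<in> Q \<longrightarrow> P Q" and "class_index Qs y < class_index Qs x"
  shows "class_index (filter P Qs) y < class_index (filter P Qs) x"
  using assms
proof (induction Qs)
  case Nil
  then show ?case by simp
next
  case (Cons Q Qs)
  have "x \<notin> Q" using Cons.prems(2) by (auto simp: class_index_Cons split: if_splits)
  then show ?case using Cons by (auto simp: class_index_Cons)
qed

lemma prec_concat_class_index:
  assumes "prec (concat (map f Qs)) x y" "\<And>Q. set (f Q) \<subseteq> Q" "class_count Qs y \<le> 1"
  shows "class_index Qs x \<le> class_index Qs y"
  using assms(1,3)
proof (induction Qs)
  case Nil
  then show ?case by (simp add: prec_def)
next
  case (Cons Q Qs)
  show ?case
  proof (cases "x \<in> Q")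
    case True
    then show ?thesis by (simp add: class_index_Cons)
  next
    case False
    then have "x \<notin> set (f Q)" using assms(2) by blast
    then have pr: "prec (concat (map f Qs)) x y"
      using prec_appendD[of "f Q" "concat (map f Qs)" x y] Cons.prems(1) prec_in_set by fastforce
    then obtain Q' where "Q' \<in> set Qs" "y \<in> set (f Q')" using prec_in_set by fastforce
    then have "y \<in> \<Union>(set Qs)" using assms(2) by blast
    then have "y \<notin> Q" using Cons.prems(2) by (auto simp: class_count_def filter_empty_conv)
    then show ?thesis
      using Cons.IH[OF pr] Cons.prems(2) \<open>x \<notin> Q\<close> by (simp add: class_index_Cons class_count_def)
  qed
qed

lemma refine_Cons:
  "refine (Q # Qs) S = (if Q \<inter> S \<noteq> {} \<and> Q - S \<noteq> {} then [Q \<inter> S, Q - S] else [Q]) @ refine Qs S"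
  by (simp add: refine_def)

lemma Union_refine: "\<Union>(set (refine Qs S)) = \<Union>(set Qs)"
  by (induction Qs) (auto simp: refine_def)

lemma class_count_refine: "class_count (refine Qs S) x = class_count Qs x"
  by (induction Qs) (auto simp: refine_def class_count_def)

lemma class_index_refine_less_iff:
  assumes "x \<in> \<Union>(set Qs)" "y \<in> \<Union>(set Qs)"
  shows "class_index (refine Qs S) x < class_index (refine Qs S) y \<longleftrightarrow>
    class_index Qs x < class_index Qs y \<or> (class_index Qs x = class_index Qs y \<and> x \<in> S \<and> y \<notin> S)"
  using assms
proof (induction Qs)
  case Nil
  then show ?case by simp
next
  case (Cons Q Qs)
  define F where "F = (if Q \<inter> S \<noteq> {} \<and> Q - S \<noteq> {} then [Q \<inter> S, Q - S] else [Q])"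
  have UF: "\<Union>(set F) = Q" by (auto simp: F_def)
  have index: "class_index (refine (Q # Qs) S) z =
      (if z \<in> Q then class_index F z else length F + class_index (refine Qs S) z)" for z
    unfolding refine_Cons F_def[symmetric] class_index_append UF by simp
  have inside: "class_index F x < class_index F y \<longleftrightarrow> x \<in> S \<and> y \<notin> S" if "x \<in> Q" "y \<in> Q"
    using that by (auto simp: F_def class_index_Cons)
  have F_less: "class_index F z < length F" if "z \<in> Q" for z
    using class_index_less[of z F] that UF by simp
  show ?case
  proof (cases "x \<in> Q"; cases "y \<in> Q")
  qed (use Cons.IH Cons.prems inside F_less[of x] F_less[of y] in \<open>auto simp: index class_index_Cons\<close>)
qed

definition split_before :: "('b \<Rightarrow> 'a set) \<Rightarrow> 'b list \<Rightarrow> 'a \<Rightarrow> 'a \<Rightarrow> bool" where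
  "split_before S bs x y \<longleftrightarrow> (\<exists>k<length bs.
     (\<forall>m<k. x \<in> S (bs ! m) \<longleftrightarrow> y \<in> S (bs ! m)) \<and> x \<in> S (bs ! k) \<and> y \<notin> S (bs ! k))"

lemma split_before_snoc:
  "split_before S (bs @ [b]) x y \<longleftrightarrow> split_before S bs x y \<or>
     ((\<forall>m<length bs. x \<in> S (bs ! m) \<longleftrightarrow> y \<in> S (bs ! m)) \<and> x \<in> S b \<and> y \<notin> S b)"
  unfolding split_before_def
  by (auto simp: nth_append less_Suc_eq)

lemma not_split_before_iff:
  "\<not> split_before S bs x y \<and> \<not> split_before S bs y x \<longleftrightarrow> (\<forall>m<length bs. x \<in> S (bs ! m) \<longleftrightarrow> y \<in> S (bs ! m))"
proof (induction bs rule: rev_induct)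
  case Nil
  then show ?case by (simp add: split_before_def)
next
  case (snoc b bs)
  then show ?case by (auto simp: split_before_snoc nth_append less_Suc_eq)
qed

lemma Union_refine_foldl: "\<Union>(set (foldl (\<lambda>Qs v. refine Qs (S v)) [V] bs)) = V"
  by (induction bs rule: rev_induct) (auto simp: Union_refine)

lemma class_count_refine_foldl:
  "class_count (foldl (\<lambda>Qs v. refine Qs (S v)) [V] bs) x = (if x \<in> V then 1 else 0)"
  by (induction bs rule: rev_induct) (simp_all add: class_count_def class_count_refine[unfolded class_count_def])

lemma class_index_refine_foldl_less_iff:
  assumes "x \<in> V" "y \<in> V"
  shows "class_index (foldl (\<lambda>Qs v. refine Qs (S v)) [V] bs) x < class_index (foldl (\<lambda>Qs v. refine Qs (S v)) [V] bs) y
    \<longleftrightarrow> split_before S bs x y"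
  using assms
proof (induction bs arbitrary: x y rule: rev_induct)
  case Nil
  then show ?case by (simp add: class_index_Cons split_before_def)
next
  case (snoc b bs)
  let ?F = "foldl (\<lambda>Qs v. refine Qs (S v)) [V] bs"
  have "class_index ?F x = class_index ?F y \<longleftrightarrow> \<not> split_before S bs x y \<and> \<not> split_before S bs y x"
    using snoc.IH[of x y] snoc.IH[of y x] snoc.prems by linarith
  moreover have "x \<in> \<Union>(set ?F)" "y \<in> \<Union>(set ?F)"
    using snoc.prems by (simp_all add: Union_refine_foldl)
  ultimately show ?case
    using class_index_refine_less_iff[of x ?F y "S b"] snoc.IH[of x y] snoc.prems
    by (simp add: split_before_snoc not_split_before_iff)
qed

lemma hd_ordering_seq:
  assumes "s \<in> V" "\<rho> \<noteq> []" "last \<rho> = s"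
  shows "ordering_seq V E s \<rho> \<beta> \<noteq> [] \<and> hd (ordering_seq V E s \<rho> \<beta>) = s"
proof -
  let ?Qs = "ordering_classes V E \<beta>"
  have "\<Union>(set ?Qs) = V" unfolding ordering_classes_def by (rule Union_refine_foldl)
  then have "filter (\<lambda>Q. s \<in> Q) ?Qs \<noteq> []" using assms(1) by (auto simp: filter_empty_conv)
  then obtain Q Qs where Qs: "filter (\<lambda>Q. s \<in> Q) ?Qs = Q # Qs" by (cases "filter (\<lambda>Q. s \<in> Q) ?Qs") auto
  then have "Q \<in> set (filter (\<lambda>Q. s \<in> Q) ?Qs)" by simp
  then have "s \<in> Q" by simp
  have "\<rho> = butlast \<rho> @ [s]" using append_butlast_last_id[OF assms(2)] assms(3) by simp
  then have rev_\<rho>: "rev \<rho> = s # rev (butlast \<rho>)" by (metis rev_eq_Cons_iff rev_rev_ident)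
  show ?thesis using \<open>s \<in> Q\<close> unfolding ordering_seq_def Let_def Qs rev_\<rho> by simp
qed

lemma dfs_order_ancestor_or_finished:
  assumes dfs: "dfs_order V G s \<omega>"
    and discovery: "\<And>i j. 0 < i \<Longrightarrow> i < length \<omega> \<Longrightarrow> j < i \<Longrightarrow> G (\<omega> ! j) (\<omega> ! i) \<Longrightarrow>
       \<forall>k. j < k \<and> k < i \<longrightarrow> {w. G (\<omega> ! k) w} \<subseteq> set (take i \<omega>) \<Longrightarrow> (\<omega> ! j, \<omega> ! i) \<in> R"
    and "b < length \<omega>" "a < b"
  shows "(\<omega> ! a, \<omega> ! b) \<in> R\<^sup>+ \<or> {w. G (\<omega> ! a) w} \<subseteq> set (take b \<omega>)"
  using assms(3,4)
proof (induction b arbitrary: a rule: less_induct)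
  case (less b)
  obtain j where j: "j < b" "G (\<omega> ! j) (\<omega> ! b)"
      "\<forall>k. j < k \<and> k < b \<longrightarrow> {w. G (\<omega> ! k) w} \<subseteq> set (take b \<omega>)"
    using dfs less.prems unfolding dfs_order_def by (metis gr_zeroI not_less0)
  have arc: "(\<omega> ! j, \<omega> ! b) \<in> R" using discovery j less.prems by simp
  consider "a = j" | "j < a" | "a < j" by linarith
  then show ?case
  proof cases
    case 3
    then have "(\<omega> ! a, \<omega> ! j) \<in> R\<^sup>+ \<or> {w. G (\<omega> ! a) w} \<subseteq> set (take j \<omega>)"
      using less.IH[of j a] j less.prems by simp
    moreover have "set (take j \<omega>) \<subseteq> set (take b \<omega>)"
      using j(1) by (simp add: set_take_subset_set_take)
    ultimately show ?thesis using arc by (meson trancl.trancl_into_trancl subset_trans)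
  qed (use arc j less.prems in auto)
qed

text \<open>Position of the L-tree parent of \<open>\<omega> ! i\<close>, meaningful when \<open>\<omega> ! i\<close> has an earlier neighbour.\<close>

definition lparent :: "('a \<Rightarrow> 'a \<Rightarrow> bool) \<Rightarrow> 'a list \<Rightarrow> nat \<Rightarrow> nat" where
  "lparent E \<omega> i = (GREATEST j. j < i \<and> E (\<omega> ! i) (\<omega> ! j))"

lemma lparent_greatest:
  assumes "j < i" "E (\<omega> ! i) (\<omega> ! j)"
  shows "lparent E \<omega> i < i" "E (\<omega> ! i) (\<omega> ! lparent E \<omega> i)" "j \<le> lparent E \<omega> i"
  using GreatestI_less_nat[of j i "\<lambda>j. E (\<omega> ! i) (\<omega> ! j)"] assms unfolding lparent_def by auto

lemma ltree_edge_iff_lparent: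
  "ltree_edge E \<omega> x y \<longleftrightarrow> (\<exists>i<length \<omega>. (\<exists>j<i. E (\<omega> ! i) (\<omega> ! j)) \<and>
     (x = \<omega> ! i \<and> y = \<omega> ! lparent E \<omega> i \<or> x = \<omega> ! lparent E \<omega> i \<and> y = \<omega> ! i))"
proof
  assume "ltree_edge E \<omega> x y"
  then obtain i j where ij: "i < length \<omega>" "j < i" "x = \<omega> ! i \<and> y = \<omega> ! j \<or> x = \<omega> ! j \<and> y = \<omega> ! i"
    "E (\<omega> ! i) (\<omega> ! j)" "\<forall>k. j < k \<and> k < i \<longrightarrow> \<not> E (\<omega> ! i) (\<omega> ! k)"
    unfolding ltree_edge_def by blast
  have "j = lparent E \<omega> i"
    using lparent_greatest[of j i E \<omega>] ij(2,4,5) by (meson le_neq_implies_less)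
  then show "\<exists>i<length \<omega>. (\<exists>j<i. E (\<omega> ! i) (\<omega> ! j)) \<and>
     (x = \<omega> ! i \<and> y = \<omega> ! lparent E \<omega> i \<or> x = \<omega> ! lparent E \<omega> i \<and> y = \<omega> ! i)"
    using ij by blast
next
  assume "\<exists>i<length \<omega>. (\<exists>j<i. E (\<omega> ! i) (\<omega> ! j)) \<and>
     (x = \<omega> ! i \<and> y = \<omega> ! lparent E \<omega> i \<or> x = \<omega> ! lparent E \<omega> i \<and> y = \<omega> ! i)"
  then obtain i j where i: "i < length \<omega>" "j < i" "E (\<omega> ! i) (\<omega> ! j)"
    "x = \<omega> ! i \<and> y = \<omega> ! lparent E \<omega> i \<or> x = \<omega> ! lparent E \<omega> i \<and> y = \<omega> ! i" by blast
  have "\<forall>k. lparent E \<omega> i < k \<and> k < i \<longrightarrow> \<not> E (\<omega> ! i) (\<omega> ! k)"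
    using lparent_greatest(3)[of _ i E \<omega>] by (meson leD)
  then show "ltree_edge E \<omega> x y"
    unfolding ltree_edge_def using lparent_greatest(1,2)[of j i E \<omega>] i by blast
qed

lemma ltree_edge_iff_parent:
  assumes dist: "distinct \<omega>" and "\<omega> \<noteq> []"
    and earlier: "\<And>i. 0 < i \<Longrightarrow> i < length \<omega> \<Longrightarrow> \<exists>j<i. E (\<omega> ! i) (\<omega> ! j)"
    and parent: "\<And>i. 0 < i \<Longrightarrow> i < length \<omega> \<Longrightarrow> \<omega> ! lparent E \<omega> i = par (\<omega> ! i)"
  shows "ltree_edge E \<omega> x y \<longleftrightarrow>
    (\<exists>v\<in>set \<omega>. v \<noteq> \<omega> ! 0 \<and> (x = v \<and> y = par v \<or> x = par v \<and> y = v))"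
proof -
  have nonroot: "\<omega> ! i \<noteq> \<omega> ! 0 \<longleftrightarrow> 0 < i" if "i < length \<omega>" for i
    using nth_eq_iff_index_eq[OF dist that, of 0] assms(2) by auto
  show ?thesis
    unfolding ltree_edge_iff_lparent
  proof
    assume "\<exists>i<length \<omega>. (\<exists>j<i. E (\<omega> ! i) (\<omega> ! j)) \<and>
      (x = \<omega> ! i \<and> y = \<omega> ! lparent E \<omega> i \<or> x = \<omega> ! lparent E \<omega> i \<and> y = \<omega> ! i)"
    then obtain i j where i: "i < length \<omega>" "j < i"
      "x = \<omega> ! i \<and> y = \<omega> ! lparent E \<omega> i \<or> x = \<omega> ! lparent E \<omega> i \<and> y = \<omega> ! i" by blast
    then show "\<exists>v\<in>set \<omega>. v \<noteq> \<omega> ! 0 \<and> (x = v \<and> y = par v \<or> x = par v \<and> y = v)"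
      using nonroot[OF i(1)] parent[of i] nth_mem[OF i(1)] by (intro bexI[of _ "\<omega> ! i"]) auto
  next
    assume "\<exists>v\<in>set \<omega>. v \<noteq> \<omega> ! 0 \<and> (x = v \<and> y = par v \<or> x = par v \<and> y = v)"
    then obtain i where i: "i < length \<omega>" "\<omega> ! i \<noteq> \<omega> ! 0"
      "x = \<omega> ! i \<and> y = par (\<omega> ! i) \<or> x = par (\<omega> ! i) \<and> y = \<omega> ! i" by (auto simp: in_set_conv_nth)
    then have "0 < i" using nonroot by blast
    then show "\<exists>i<length \<omega>. (\<exists>j<i. E (\<omega> ! i) (\<omega> ! j)) \<and>
      (x = \<omega> ! i \<and> y = \<omega> ! lparent E \<omega> i \<or> x = \<omega> ! lparent E \<omega> i \<and> y = \<omega> ! i)"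
      using i earlier[OF _ i(1)] parent[OF _ i(1)] by auto
  qed
qed

lemma dfs_order_earlier_nbr:
  assumes "dfs_order V E s \<omega>" "\<And>x y. E x y \<Longrightarrow> E y x" "0 < i" "i < length \<omega>"
  shows "\<exists>j<i. E (\<omega> ! i) (\<omega> ! j)"
  using assms unfolding dfs_order_def by blast

lemma dfs_order_discovery_lparent:
  assumes \<omega>: "dfs_order V E s \<omega>" and sym: "\<And>x y. E x y \<Longrightarrow> E y x"
    and "i < length \<omega>" "j < i" "E (\<omega> ! j) (\<omega> ! i)"
    and finished: "\<forall>k. j < k \<and> k < i \<longrightarrow> {w. E (\<omega> ! k) w} \<subseteq> set (take i \<omega>)"
  shows "j = lparent E \<omega> i"
proof -
  have "distinct \<omega>" using \<omega> unfolding dfs_order_def is_vorder_def by blast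
  then have unvisited: "\<omega> ! i \<notin> set (take i \<omega>)" using nth_notin_set_take assms(3) by blast
  have "\<not> E (\<omega> ! i) (\<omega> ! k)" if "j < k" "k < i" for k
  proof
    assume "E (\<omega> ! i) (\<omega> ! k)"
    then have "\<omega> ! i \<in> {w. E (\<omega> ! k) w}" using sym by blast
    then show False using finished that unvisited by blast
  qed
  moreover note l = lparent_greatest[of j i E \<omega>, OF assms(4) sym[OF assms(5)]]
  ultimately show ?thesis using le_neq_implies_less by blast
qed

lemma dfs_order_edge_ancestor:
  assumes G: "graph V E" and \<omega>: "dfs_order V E s \<omega>" and "E x y"
  defines "R \<equiv> {(\<omega> ! lparent E \<omega> i, \<omega> ! i) | i. 0 < i \<and> i < length \<omega>}"
  shows "(x, y) \<in> R\<^sup>+ \<or> (y, x) \<in> R\<^sup>+"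
proof -
  have sym: "\<And>x y. E x y \<Longrightarrow> E y x" using G unfolding graph_def by blast
  have dist: "distinct \<omega>" and set: "set \<omega> = V" using \<omega> unfolding dfs_order_def is_vorder_def by auto
  have before: "(\<omega> ! a, \<omega> ! b) \<in> R\<^sup>+" if "a < b" "b < length \<omega>" "E (\<omega> ! a) (\<omega> ! b)" for a b
  proof -
    have "\<omega> ! b \<notin> set (take b \<omega>)" using nth_notin_set_take[OF dist order_refl that(2)] .
    moreover have "(\<omega> ! j, \<omega> ! i) \<in> R"
      if "0 < i" "i < length \<omega>" "j < i" "E (\<omega> ! j) (\<omega> ! i)"
        "\<forall>k. j < k \<and> k < i \<longrightarrow> {w. E (\<omega> ! k) w} \<subseteq> set (take i \<omega>)" for i j
      using dfs_order_discovery_lparent[OF \<omega> sym that(2-)] that(1,2) unfolding R_def by blast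
    ultimately show ?thesis
      using dfs_order_ancestor_or_finished[OF \<omega> _ that(2,1), of R] that(3) by blast
  qed
  have "x \<in> set \<omega>" "y \<in> set \<omega>" "x \<noteq> y" using G assms(3) set unfolding graph_def by auto
  then obtain a b where a: "a < length \<omega>" "\<omega> ! a = x" and b: "b < length \<omega>" "\<omega> ! b = y" and "a \<noteq> b"
    by (metis in_set_conv_nth)
  then consider "a < b" | "b < a" by fastforce
  then show ?thesis
  proof cases
    case 1
    then show ?thesis using before a b assms(3) by blast
  next
    case 2
    then show ?thesis using before a b sym[OF assms(3)] by blast
  qed
qed

section \<open>Normal spanning trees\<close>

definition tree_arcs :: "'a set \<Rightarrow> 'a \<Rightarrow> ('a \<Rightarrow> 'a) \<Rightarrow> ('a \<times> 'a) set" where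
  "tree_arcs V s par = {(par v, v) | v. v \<in> V \<and> v \<noteq> s}"

lemma tree_arcs_lparent:
  assumes dist: "distinct \<omega>" and "\<omega> \<noteq> []" "set \<omega> = V" "\<omega> ! 0 = s"
    and parent: "\<And>i. i < length \<omega> \<Longrightarrow> par (\<omega> ! i) = \<omega> ! lparent E \<omega> i"
  shows "tree_arcs V s par = {(\<omega> ! lparent E \<omega> i, \<omega> ! i) | i. 0 < i \<and> i < length \<omega>}"
proof -
  have nonroot: "\<omega> ! i \<noteq> s \<longleftrightarrow> 0 < i" if "i < length \<omega>" for i
    using nth_eq_iff_index_eq[OF dist that, of 0] assms(2,4) by auto
  show ?thesis
    unfolding tree_arcs_def
  proof (intro set_eqI iffI)
    fix p
    assume "p \<in> {(par v, v) | v. v \<in> V \<and> v \<noteq> s}"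
    then obtain v where "p = (par v, v)" "v \<in> V" "v \<noteq> s" by blast
    moreover obtain i where "i < length \<omega>" "\<omega> ! i = v"
      using assms(3) calculation(2) by (metis in_set_conv_nth)
    ultimately show "p \<in> {(\<omega> ! lparent E \<omega> i, \<omega> ! i) | i. 0 < i \<and> i < length \<omega>}"
      using nonroot parent by auto
  next
    fix p
    assume "p \<in> {(\<omega> ! lparent E \<omega> i, \<omega> ! i) | i. 0 < i \<and> i < length \<omega>}"
    then obtain i where "p = (\<omega> ! lparent E \<omega> i, \<omega> ! i)" "0 < i" "i < length \<omega>" by blast
    then show "p \<in> {(par v, v) | v. v \<in> V \<and> v \<noteq> s}"
      using nonroot parent assms(3) nth_mem by auto
  qed
qed

text \<open>Normality (\<open>edge_ancestor\<close>) is the property of DFS trees that every edge joins a vertex to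
  one of its descendants; \<open>rank\<close> only witnesses that the parent pointers lead to the root.\<close>

locale normal_tree =
  fixes V :: "'a set" and E TE :: "'a \<Rightarrow> 'a \<Rightarrow> bool" and s :: 'a
    and par :: "'a \<Rightarrow> 'a" and rank :: "'a \<Rightarrow> nat"
  assumes edge: "E x y \<Longrightarrow> x \<in> V \<and> y \<in> V \<and> x \<noteq> y \<and> E y x"
    and root_in_V: "s \<in> V"
    and par_in_V: "v \<in> V \<Longrightarrow> v \<noteq> s \<Longrightarrow> par v \<in> V"
    and par_edge: "v \<in> V \<Longrightarrow> v \<noteq> s \<Longrightarrow> E (par v) v"
    and rank_par: "v \<in> V \<Longrightarrow> v \<noteq> s \<Longrightarrow> rank (par v) < rank v"
    and TE_iff: "TE x y \<longleftrightarrow> (y \<in> V \<and> y \<noteq> s \<and> x = par y) \<or> (x \<in> V \<and> x \<noteq> s \<and> y = par x)"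
    and edge_ancestor: "E x y \<Longrightarrow> (x, y) \<in> (tree_arcs V s par)\<^sup>+ \<or> (y, x) \<in> (tree_arcs V s par)\<^sup>+"
begin

abbreviation arcs :: "('a \<times> 'a) set" where
  "arcs \<equiv> tree_arcs V s par"

lemma arcs_iff: "(x, y) \<in> arcs \<longleftrightarrow> y \<in> V \<and> y \<noteq> s \<and> x = par y"
  by (auto simp: tree_arcs_def)

lemma arcs_trancl_rank: "(x, y) \<in> arcs\<^sup>+ \<Longrightarrow> rank x < rank y"
  by (induction rule: trancl_induct) (auto simp: arcs_iff dest: rank_par)

lemma arcs_trancl_irrefl: "(x, x) \<notin> arcs\<^sup>+"
  using arcs_trancl_rank by blast

lemma arcs_tranclD: "(a, c) \<in> arcs\<^sup>+ \<Longrightarrow> c \<in> V \<and> c \<noteq> s \<and> (a, par c) \<in> arcs\<^sup>*"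
  by (auto simp: arcs_iff dest: tranclD2)

lemma arcs_trancl_iff_par: "z \<in> V \<Longrightarrow> z \<noteq> s \<Longrightarrow> (v, z) \<in> arcs\<^sup>+ \<longleftrightarrow> (v, par z) \<in> arcs\<^sup>*"
  using arcs_tranclD rtrancl_into_trancl1[of v "par z" arcs z] by (auto simp: arcs_iff)

lemma arcs_rtrancl_in_V: "(a, c) \<in> arcs\<^sup>* \<Longrightarrow> c \<in> V \<Longrightarrow> a \<in> V"
  by (induction rule: converse_rtrancl_induct) (auto simp: arcs_iff par_in_V)

lemma arcs_trancl_in_V: "(a, c) \<in> arcs\<^sup>+ \<Longrightarrow> a \<in> V \<and> c \<in> V"
  using arcs_tranclD arcs_rtrancl_in_V par_in_V by blast

lemma arcs_rtrancl_in_V_right: "(a, c) \<in> arcs\<^sup>* \<Longrightarrow> a \<in> V \<Longrightarrow> c \<in> V"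
  by (auto dest: rtranclD arcs_trancl_in_V)

lemma ancestors_comparable:
  "(a, w) \<in> arcs\<^sup>* \<Longrightarrow> (b, w) \<in> arcs\<^sup>* \<Longrightarrow> a = b \<or> (a, b) \<in> arcs\<^sup>+ \<or> (b, a) \<in> arcs\<^sup>+"
proof (induction arbitrary: b rule: rtrancl_induct)
  case base
  then show ?case by (blast dest: rtranclD)
next
  case (step y z)
  from step.prems show ?case
  proof (cases rule: rtranclE)
    case base
    then show ?thesis using step.hyps by auto
  next
    case (step y')
    then show ?thesis using \<open>(y, z) \<in> arcs\<close> step.IH by (auto simp: arcs_iff)
  qed
qed

lemma edge_sym: "E x y \<Longrightarrow> E y x"
  using edge by blast

lemma TE_sym: "TE x y \<Longrightarrow> TE y x"
  using TE_iff by blast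

definition tree_search_order :: "'a list \<Rightarrow> bool" where
  "tree_search_order \<omega> \<longleftrightarrow> is_vorder V \<omega> \<and> \<omega> \<noteq> [] \<and> hd \<omega> = s \<and>
     (\<forall>i. 0 < i \<and> i < length \<omega> \<longrightarrow> (\<exists>j<i. TE (\<omega> ! j) (\<omega> ! i)))"

lemma tree_search_orderD:
  assumes "tree_search_order \<omega>"
  shows "distinct \<omega>" "set \<omega> = V" "0 < length \<omega>" "\<omega> ! 0 = s"
  using assms hd_conv_nth[of \<omega>] unfolding tree_search_order_def is_vorder_def by auto

lemma tree_search_order_nth_neq_root:
  "tree_search_order \<omega> \<Longrightarrow> 0 < i \<Longrightarrow> i < length \<omega> \<Longrightarrow> \<omega> ! i \<noteq> s"
  using nth_eq_iff_index_eq[OF tree_search_orderD(1), of \<omega> i 0] tree_search_orderD(3,4) by fastforce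

lemma tree_search_order_nth:
  assumes "tree_search_order \<omega>" "0 < i" "i < length \<omega>"
  shows "\<omega> ! i \<in> V" "\<omega> ! i \<noteq> s" "\<omega> ! i \<notin> set (take i \<omega>)" "s \<in> set (take i \<omega>)"
proof -
  show "\<omega> ! i \<in> V" using tree_search_orderD(2)[OF assms(1)] nth_mem[OF assms(3)] by simp
  show "\<omega> ! i \<noteq> s" using tree_search_order_nth_neq_root[OF assms] .
  show "\<omega> ! i \<notin> set (take i \<omega>)"
    using nth_notin_set_take[OF tree_search_orderD(1)[OF assms(1)] order_refl assms(3)] .
  show "s \<in> set (take i \<omega>)"
    unfolding in_set_take_iff using assms tree_search_orderD(4)[OF assms(1)] by (intro exI[of _ 0]) auto
qed

lemma tree_search_order_index: "tree_search_order \<omega> \<Longrightarrow> v \<in> V \<Longrightarrow> \<exists>k<length \<omega>. \<omega> ! k = v"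
  by (metis tree_search_orderD(2) in_set_conv_nth)

lemma tree_search_order_take_par_closed:
  assumes \<omega>: "tree_search_order \<omega>" and "i \<le> length \<omega>" "v \<in> set (take i \<omega>)" "v \<noteq> s"
  shows "par v \<in> set (take i \<omega>)"
  using assms(2-)
proof (induction i arbitrary: v)
  case 0
  then show ?case by simp
next
  case (Suc i)
  have i: "i < length \<omega>" using Suc.prems by simp
  have take_Suc: "set (take (Suc i) \<omega>) = insert (\<omega> ! i) (set (take i \<omega>))"
    using i by (simp add: take_Suc_conv_app_nth)
  show ?case
  proof (cases "v \<in> set (take i \<omega>)")
    case True
    then show ?thesis using Suc take_Suc by auto
  next
    case False
    then have v: "v = \<omega> ! i" using Suc.prems take_Suc by auto
    then have "0 < i" using Suc.prems(3) tree_search_orderD(4)[OF \<omega>] by (metis gr0I)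
    then obtain j where j: "j < i" "TE (\<omega> ! j) (\<omega> ! i)"
      using \<omega> i unfolding tree_search_order_def by blast
    have visited: "\<omega> ! j \<in> set (take i \<omega>)" using j(1) i by (auto simp: in_set_take_iff)
    have "\<omega> ! j = par (\<omega> ! i)"
    proof (rule ccontr)
      assume "\<omega> ! j \<noteq> par (\<omega> ! i)"
      then have "\<omega> ! j \<noteq> s" "\<omega> ! i = par (\<omega> ! j)" using j(2) TE_iff by blast+
      then have "\<omega> ! i \<in> set (take i \<omega>)" using Suc.IH visited i by simp
      then show False using nth_notin_set_take[OF tree_search_orderD(1)[OF \<omega>] order_refl i] by simp
    qed
    then show ?thesis using v visited take_Suc by simp
  qed
qed

lemma ancestor_closed:
  assumes "\<forall>v\<in>C. v \<noteq> s \<longrightarrow> par v \<in> C" "(a, b) \<in> arcs\<^sup>+" "b \<in> C"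
  shows "a \<in> C"
  using assms(2,3) by (induction rule: converse_trancl_induct) (use assms(1) in \<open>auto simp: arcs_iff\<close>)

lemma tree_search_order_take_ancestor_closed:
  assumes "tree_search_order \<omega>" "i \<le> length \<omega>" "(a, b) \<in> arcs\<^sup>*" "b \<in> set (take i \<omega>)"
  shows "a \<in> set (take i \<omega>)"
  using ancestor_closed[of "set (take i \<omega>)" a b] tree_search_order_take_par_closed[OF assms(1,2)] assms(3,4)
  by (auto dest: rtranclD)

lemma tree_search_order_ancestor_before:
  assumes \<omega>: "tree_search_order \<omega>" and "k < length \<omega>" "l < length \<omega>" "(\<omega> ! k, \<omega> ! l) \<in> arcs\<^sup>+"
  shows "k < l"
proof -
  have "\<omega> ! l \<in> set (take (Suc l) \<omega>)" using assms(3) by (auto simp: in_set_take_iff)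
  then have "\<omega> ! k \<in> set (take (Suc l) \<omega>)"
    using tree_search_order_take_ancestor_closed[OF \<omega> _ trancl_into_rtrancl[OF assms(4)]] assms(3) by simp
  then obtain k' where "k' < Suc l" "k' < length \<omega>" "\<omega> ! k' = \<omega> ! k" by (auto simp: in_set_take_iff)
  then have "k \<le> l" using nth_eq_iff_index_eq[OF tree_search_orderD(1)[OF \<omega>] _ assms(2)] by auto
  moreover have "k \<noteq> l" using assms(4) arcs_trancl_irrefl by auto
  ultimately show "k < l" by simp
qed

lemma tree_search_order_prec:
  "tree_search_order \<omega> \<Longrightarrow> (u, v) \<in> arcs\<^sup>+ \<Longrightarrow> prec \<omega> u v"
  unfolding prec_def
  using arcs_trancl_in_V tree_search_order_ancestor_before tree_search_order_index by metis

lemma tree_search_order_proper_ancestor_in_take: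
  assumes "tree_search_order \<omega>" "i < length \<omega>" "(u, \<omega> ! i) \<in> arcs\<^sup>+"
  shows "u \<in> set (take i \<omega>)"
proof -
  obtain k where "k < length \<omega>" "\<omega> ! k = u"
    using assms arcs_trancl_in_V tree_search_order_index by blast
  then show ?thesis
    using tree_search_order_ancestor_before[OF assms(1) _ assms(2)] assms(3) by (auto simp: in_set_take_iff)
qed

lemma tree_search_order_parent:
  assumes "tree_search_order \<omega>" "j < i" "i < length \<omega>" "TE (\<omega> ! j) (\<omega> ! i)"
  shows "\<omega> ! i \<noteq> s \<and> \<omega> ! j = par (\<omega> ! i)"
proof (rule ccontr)
  assume "\<not> ?thesis"
  then have "(\<omega> ! i, \<omega> ! j) \<in> arcs" using assms(4) TE_iff arcs_iff by auto
  then show False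
    using tree_search_order_ancestor_before[OF assms(1), of i j] assms(2,3) by auto
qed

section \<open>Dominance\<close>

text \<open>The deepest vertex on the tree path from \<open>s\<close> to \<open>p\<close> adjacent to exactly one of \<open>x\<close>, \<open>y\<close> is
  adjacent to \<open>x\<close>. Once all numbered neighbours of \<open>x\<close> and \<open>y\<close> lie on that path, this is how their
  LexDFS labels compare.\<close>

definition dominates :: "'a \<Rightarrow> 'a \<Rightarrow> 'a \<Rightarrow> bool" where
  "dominates x y p \<longleftrightarrow> (\<exists>u. (u, p) \<in> arcs\<^sup>* \<and> E u x \<and> \<not> E u y \<and>
     (\<forall>u'. (u', p) \<in> arcs\<^sup>* \<and> (u, u') \<in> arcs\<^sup>+ \<longrightarrow> (E u' x \<longleftrightarrow> E u' y)))"

lemma dominates_by_parent: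
  assumes "c \<in> V" "c \<noteq> s" "\<not> E (par c) w"
  shows "dominates c w (par c)"
  unfolding dominates_def using assms par_edge arcs_trancl_irrefl
  by (intro exI[of _ "par c"]) (auto dest: rtrancl_trancl_trancl)

lemma label_less_iff_dominates:
  assumes \<omega>: "tree_search_order \<omega>" and "i \<le> length \<omega>"
    and path_visited: "\<And>u. (u, p) \<in> arcs\<^sup>* \<Longrightarrow> u \<in> set (take i \<omega>)"
    and nbrs: "\<And>k z. k < i \<Longrightarrow> z \<in> {x, y} \<Longrightarrow> E (\<omega> ! k) z \<Longrightarrow> (\<omega> ! k, p) \<in> arcs\<^sup>*"
    and "x \<noteq> s" "y \<noteq> s"
  shows "(lex_label E s \<omega> i y, lex_label E s \<omega> i x) \<in> label_less \<longleftrightarrow> dominates x y p"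
  unfolding lex_label_less_iff[OF assms(5,6)]
proof
  assume "\<exists>k<i. E (\<omega> ! k) x \<and> \<not> E (\<omega> ! k) y \<and> (\<forall>m. k < m \<and> m < i \<longrightarrow> (E (\<omega> ! m) y \<longleftrightarrow> E (\<omega> ! m) x))"
  then obtain k where k: "k < i" "E (\<omega> ! k) x" "\<not> E (\<omega> ! k) y"
    and later: "\<forall>m. k < m \<and> m < i \<longrightarrow> (E (\<omega> ! m) y \<longleftrightarrow> E (\<omega> ! m) x)" by blast
  have "E u' x \<longleftrightarrow> E u' y" if on_path: "(u', p) \<in> arcs\<^sup>*" and below: "(\<omega> ! k, u') \<in> arcs\<^sup>+" for u'
  proof -
    obtain m where "m < i" "m < length \<omega>" "\<omega> ! m = u'"
      using path_visited[OF on_path] by (auto simp: in_set_take_iff)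
    moreover have "k < m"
      using tree_search_order_ancestor_before[OF \<omega>, of k m] below k(1) assms(2) calculation by simp
    ultimately show ?thesis using later by blast
  qed
  then show "dominates x y p"
    unfolding dominates_def using nbrs[of k x] k by blast
next
  assume "dominates x y p"
  then obtain u where u: "(u, p) \<in> arcs\<^sup>*" "E u x" "\<not> E u y"
    and below: "\<forall>u'. (u', p) \<in> arcs\<^sup>* \<and> (u, u') \<in> arcs\<^sup>+ \<longrightarrow> (E u' x \<longleftrightarrow> E u' y)"
    unfolding dominates_def by blast
  obtain k where k: "k < i" "k < length \<omega>" "\<omega> ! k = u"
    using path_visited[OF u(1)] by (auto simp: in_set_take_iff)
  have "E (\<omega> ! m) y \<longleftrightarrow> E (\<omega> ! m) x" if m: "k < m" "m < i" for m
  proof (rule ccontr)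
    assume differ: "\<not> (E (\<omega> ! m) y \<longleftrightarrow> E (\<omega> ! m) x)"
    then have on_path: "(\<omega> ! m, p) \<in> arcs\<^sup>*" using nbrs m by blast
    have "m < length \<omega>" using m assms(2) by simp
    then consider "m = k" | "(\<omega> ! m, u) \<in> arcs\<^sup>+" | "(u, \<omega> ! m) \<in> arcs\<^sup>+"
      using ancestors_comparable[OF on_path u(1)] k nth_eq_iff_index_eq[OF tree_search_orderD(1)[OF \<omega>]]
      by metis
    then show False
      using m differ below on_path tree_search_order_ancestor_before[OF \<omega> \<open>m < length \<omega>\<close> k(2)] k(3)
      by cases auto
  qed
  then show "\<exists>k<i. E (\<omega> ! k) x \<and> \<not> E (\<omega> ! k) y \<and> (\<forall>m. k < m \<and> m < i \<longrightarrow> (E (\<omega> ! m) y \<longleftrightarrow> E (\<omega> ! m) x))"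
    using k u by blast
qed

lemma tree_search_order_visited_nbr:
  assumes \<omega>: "tree_search_order \<omega>" and "i \<le> length \<omega>" "d \<notin> set (take i \<omega>)" "(d, w) \<in> arcs\<^sup>*"
    and "k < i" "E (\<omega> ! k) w"
  shows "(\<omega> ! k, par d) \<in> arcs\<^sup>*"
proof -
  have visited: "\<omega> ! k \<in> set (take i \<omega>)" using assms(2,5) by (auto simp: in_set_take_iff)
  have not_below_d: "(d, \<omega> ! k) \<notin> arcs\<^sup>*"
    using tree_search_order_take_ancestor_closed[OF \<omega> assms(2) _ visited] assms(3) by blast
  moreover have "(w, \<omega> ! k) \<in> arcs\<^sup>+ \<Longrightarrow> (d, \<omega> ! k) \<in> arcs\<^sup>*"
    using rtrancl_trancl_trancl[OF assms(4)] by (rule trancl_into_rtrancl)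
  ultimately have "(\<omega> ! k, w) \<in> arcs\<^sup>+"
    using edge_ancestor[OF assms(6)] by blast
  then have "\<omega> ! k = d \<or> (\<omega> ! k, d) \<in> arcs\<^sup>+ \<or> (d, \<omega> ! k) \<in> arcs\<^sup>+"
    using ancestors_comparable[OF _ assms(4)] by (simp add: trancl_into_rtrancl)
  then have "(\<omega> ! k, d) \<in> arcs\<^sup>+" using not_below_d by (auto dest: trancl_into_rtrancl)
  then show ?thesis using arcs_tranclD by blast
qed

lemma dfs_order_tree_search_order: "dfs_order V TE s \<sigma> \<Longrightarrow> tree_search_order \<sigma>"
  unfolding dfs_order_def tree_search_order_def by blast

lemma dfs_tree_ancestor_or_finished:
  assumes "dfs_order V TE s \<sigma>" "b < length \<sigma>" "a < b"
  shows "(\<sigma> ! a, \<sigma> ! b) \<in> arcs\<^sup>+ \<or> {w. TE (\<sigma> ! a) w} \<subseteq> set (take b \<sigma>)"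
proof (rule dfs_order_ancestor_or_finished[OF assms(1) _ assms(2,3)])
  have \<omega>: "tree_search_order \<sigma>" using dfs_order_tree_search_order[OF assms(1)] .
  fix i j assume "i < length \<sigma>" "j < i" "TE (\<sigma> ! j) (\<sigma> ! i)"
  then show "(\<sigma> ! j, \<sigma> ! i) \<in> arcs"
    using tree_search_order_parent[OF \<omega>] tree_search_orderD(2)[OF \<omega>] nth_mem by (auto simp: arcs_iff)
qed

lemma dfs_tree_unfinished_ancestor:
  assumes \<sigma>: "dfs_order V TE s \<sigma>" and i: "i < length \<sigma>"
    and "u \<in> set (take i \<sigma>)" "(u, w) \<in> arcs\<^sup>+" "w \<notin> set (take i \<sigma>)"
  shows "(u, \<sigma> ! i) \<in> arcs\<^sup>+"
proof (rule ccontr)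
  assume not_above: "(u, \<sigma> ! i) \<notin> arcs\<^sup>+"
  have closed: "z \<in> set (take i \<sigma>)"
    if arc: "(y, z) \<in> arcs" and visited: "y \<in> set (take i \<sigma>)" and not_above: "(y, \<sigma> ! i) \<notin> arcs\<^sup>+"
    for y z
  proof -
    obtain a where "a < i" "\<sigma> ! a = y" using visited by (auto simp: in_set_take_iff)
    then have "{w. TE y w} \<subseteq> set (take i \<sigma>)" using dfs_tree_ancestor_or_finished[OF \<sigma> i] not_above by blast
    moreover have "TE y z" using arc by (auto simp: arcs_iff TE_iff)
    ultimately show ?thesis by blast
  qed
  have "z \<in> set (take i \<sigma>) \<and> (z, \<sigma> ! i) \<notin> arcs\<^sup>+" if "(u, z) \<in> arcs\<^sup>+" for z
    using that
  proof (induction rule: trancl_induct)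
    case (base z)
    then show ?case using closed[OF base assms(3) not_above] not_above trancl_into_trancl2[OF base] by blast
  next
    case (step y z)
    then show ?case using closed[OF step(2)] trancl_into_trancl2[OF step(2)] by blast
  qed
  then show False using assms(4,5) by blast
qed

lemma dfs_tree_visited_nbr:
  assumes \<sigma>: "dfs_order V TE s \<sigma>" and i: "0 < i" "i < length \<sigma>"
    and w: "w \<in> V" "w \<notin> set (take i \<sigma>)" and "k < i" "E (\<sigma> ! k) w"
  shows "(\<sigma> ! k, par (\<sigma> ! i)) \<in> arcs\<^sup>*"
proof -
  have \<omega>: "tree_search_order \<sigma>" using dfs_order_tree_search_order[OF \<sigma>] .
  have visited: "\<sigma> ! k \<in> set (take i \<sigma>)" using i(2) assms(6) by (auto simp: in_set_take_iff)
  have "(w, \<sigma> ! k) \<notin> arcs\<^sup>+"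
    using tree_search_order_take_ancestor_closed[OF \<omega> _ _ visited] i(2) w(2) by (meson less_imp_le trancl_into_rtrancl)
  then have "(\<sigma> ! k, w) \<in> arcs\<^sup>+" using edge_ancestor[OF assms(7)] by blast
  then have "(\<sigma> ! k, \<sigma> ! i) \<in> arcs\<^sup>+" using dfs_tree_unfinished_ancestor[OF \<sigma> i(2) visited _ w(2)] by blast
  then show ?thesis using arcs_tranclD by blast
qed

lemma lexdfs_sibling_subtree_not_dominates:
  assumes \<pi>: "tree_search_order \<pi>" "lexdfs_order V E s \<pi>"
    and c: "k1 < length \<pi>" "\<pi> ! k1 = c" "c \<noteq> s"
    and d: "k2 < length \<pi>" "\<pi> ! k2 = d" "k1 \<le> k2" "par d = par c"
    and w: "(d, w) \<in> arcs\<^sup>*" "w \<noteq> c"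
  shows "\<not> dominates w c (par c)"
proof -
  have dist: "distinct \<pi>" using tree_search_orderD(1)[OF \<pi>(1)] .
  have "c \<in> V" "d \<in> V" using c(1,2) d(1,2) tree_search_orderD(2)[OF \<pi>(1)] nth_mem by blast+
  then have "w \<in> V" using arcs_rtrancl_in_V_right w(1) by blast
  have k1: "0 < k1" using c(2,3) tree_search_orderD(4)[OF \<pi>(1)] by (metis gr0I)
  have unvisited: "d \<notin> set (take k1 \<pi>)" "c \<notin> set (take k1 \<pi>)"
    using nth_notin_set_take[OF dist] c d by auto
  then have w_unvisited: "w \<notin> set (take k1 \<pi>)"
    using tree_search_order_take_ancestor_closed[OF \<pi>(1) _ w(1)] c(1) by (meson less_imp_le)
  moreover have "s \<in> set (take k1 \<pi>)"
    using k1 c(1) tree_search_orderD(4)[OF \<pi>(1)] by (auto simp: in_set_take_iff)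
  ultimately have "w \<noteq> s" by blast
  have "(par c, c) \<in> arcs" using \<open>c \<in> V\<close> c(3) by (simp add: arcs_iff)
  then have path: "u \<in> set (take k1 \<pi>)" if "(u, par c) \<in> arcs\<^sup>*" for u
    using tree_search_order_proper_ancestor_in_take[OF \<pi>(1) c(1)] c(2) that by (meson rtrancl_into_trancl1)
  have "E (\<pi> ! k) z \<Longrightarrow> (\<pi> ! k, par c) \<in> arcs\<^sup>*" if "k < k1" "z \<in> {w, c}" for k z
    using tree_search_order_visited_nbr[OF \<pi>(1) less_imp_le[OF c(1)] unvisited(1) w(1) that(1)]
      tree_search_order_visited_nbr[OF \<pi>(1) less_imp_le[OF c(1)] unvisited(2) rtrancl_refl that(1)] d(4) that(2)
    by auto
  then have "(lex_label E s \<pi> k1 c, lex_label E s \<pi> k1 w) \<in> label_less \<longleftrightarrow> dominates w c (par c)"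
    using label_less_iff_dominates[OF \<pi>(1) less_imp_le[OF c(1)] path] \<open>w \<noteq> s\<close> c(3) by blast
  moreover have "(lex_label E s \<pi> k1 c, lex_label E s \<pi> k1 w) \<notin> label_less"
    using \<pi>(2) c(1,2) \<open>w \<in> V\<close> w_unvisited unfolding lexdfs_order_def by blast
  ultimately show ?thesis by blast
qed

lemma dfs_tree_label_less_iff_dominates:
  assumes \<sigma>: "dfs_order V TE s \<sigma>" and i: "0 < i" "i < length \<sigma>"
    and x: "x \<in> V" "x \<notin> set (take i \<sigma>)" "x \<noteq> s" and y: "y \<in> V" "y \<notin> set (take i \<sigma>)" "y \<noteq> s"
  shows "(lex_label E s \<sigma> i y, lex_label E s \<sigma> i x) \<in> label_less \<longleftrightarrow> dominates x y (par (\<sigma> ! i))"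
proof (rule label_less_iff_dominates[OF dfs_order_tree_search_order[OF \<sigma>] less_imp_le[OF i(2)] _ _ x(3) y(3)])
  have \<omega>: "tree_search_order \<sigma>" using dfs_order_tree_search_order[OF \<sigma>] .
  have "(par (\<sigma> ! i), \<sigma> ! i) \<in> arcs" using tree_search_order_nth[OF \<omega> i] by (simp add: arcs_iff)
  then show "u \<in> set (take i \<sigma>)" if "(u, par (\<sigma> ! i)) \<in> arcs\<^sup>*" for u
    using tree_search_order_proper_ancestor_in_take[OF \<omega> i(2)] that by (meson rtrancl_into_trancl1)
  show "(\<sigma> ! k, par (\<sigma> ! i)) \<in> arcs\<^sup>*" if "k < i" "z \<in> {x, y}" "E (\<sigma> ! k) z" for k z
    using dfs_tree_visited_nbr[OF \<sigma> i _ _ that(1)] that(2,3) x y by blast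
qed

definition never_skips_dominating_sibling :: "'a list \<Rightarrow> bool" where
  "never_skips_dominating_sibling \<sigma> \<longleftrightarrow> (\<forall>i d. 0 < i \<and> i < length \<sigma> \<and> d \<in> V \<and>
     par d = par (\<sigma> ! i) \<and> d \<notin> set (take i \<sigma>) \<and> d \<noteq> \<sigma> ! i \<longrightarrow> \<not> dominates d (\<sigma> ! i) (par (\<sigma> ! i)))"

lemma dfs_tree_dominates_outside_subtree:
  assumes \<sigma>: "dfs_order V TE s \<sigma>" and i: "0 < i" "i < length \<sigma>"
    and "w \<notin> set (take i \<sigma>)" "(par (\<sigma> ! i), w) \<notin> arcs\<^sup>+"
  shows "dominates (\<sigma> ! i) w (par (\<sigma> ! i))"
proof -
  have \<omega>: "tree_search_order \<sigma>" using dfs_order_tree_search_order[OF \<sigma>] .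
  have "(par (\<sigma> ! i), \<sigma> ! i) \<in> arcs" using tree_search_order_nth[OF \<omega> i] by (simp add: arcs_iff)
  then have "(w, par (\<sigma> ! i)) \<notin> arcs\<^sup>+"
    using tree_search_order_proper_ancestor_in_take[OF \<omega> i(2)] assms(4) by (meson trancl_into_trancl)
  then have "\<not> E (par (\<sigma> ! i)) w" using edge_ancestor assms(5) by blast
  then show ?thesis using dominates_by_parent tree_search_order_nth[OF \<omega> i] by blast
qed

lemma dfs_tree_unvisited_child:
  assumes \<sigma>: "dfs_order V TE s \<sigma>" and i: "i < length \<sigma>"
    and "(par (\<sigma> ! i), d) \<in> arcs" "(d, w) \<in> arcs\<^sup>*" "w \<notin> set (take i \<sigma>)"
  shows "d \<notin> set (take i \<sigma>)"
proof
  assume "d \<in> set (take i \<sigma>)"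
  then have "(d, w) \<in> arcs\<^sup>+" using assms(4,5) by (auto dest: rtranclD)
  then have "(d, \<sigma> ! i) \<in> arcs\<^sup>+"
    using dfs_tree_unfinished_ancestor[OF \<sigma> i \<open>d \<in> set (take i \<sigma>)\<close> _ assms(5)] by blast
  then have "(d, par (\<sigma> ! i)) \<in> arcs\<^sup>*" using arcs_tranclD by blast
  then show False using rtrancl_into_trancl2[OF assms(3)] arcs_trancl_irrefl by blast
qed

text \<open>\<open>\<pi>\<close> chose \<open>x\<close> while the subtree of its later sibling \<open>d\<close> was still unvisited.\<close>

lemma dfs_tree_sibling_subtree_label:
  assumes \<pi>: "tree_search_order \<pi>" "lexdfs_order V E s \<pi>" and \<sigma>: "dfs_order V TE s \<sigma>"
    and i: "0 < i" "i < length \<sigma>"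
    and x: "kx < length \<pi>" "\<pi> ! kx = x" "par x = par (\<sigma> ! i)" "x \<notin> set (take i \<sigma>)"
    and d: "kd < length \<pi>" "\<pi> ! kd = d" "kx \<le> kd" "par d = par (\<sigma> ! i)"
    and w: "(d, w) \<in> arcs\<^sup>*" "w \<in> V" "w \<notin> set (take i \<sigma>)"
  shows "(lex_label E s \<sigma> i x, lex_label E s \<sigma> i w) \<notin> label_less"
proof (cases "w = x")
  case False
  have \<omega>: "tree_search_order \<sigma>" using dfs_order_tree_search_order[OF \<sigma>] .
  have "x \<in> V" using x(1,2) tree_search_orderD(2)[OF \<pi>(1)] nth_mem by blast
  moreover have "x \<noteq> s" "w \<noteq> s" using x(4) w(3) tree_search_order_nth(4)[OF \<omega> i] by blast+
  moreover have "\<not> dominates w x (par x)"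
    using lexdfs_sibling_subtree_not_dominates[OF \<pi> x(1,2) \<open>x \<noteq> s\<close> d(1,2,3)] d(4) x(3) w(1) False
    by simp
  ultimately show ?thesis
    using dfs_tree_label_less_iff_dominates[OF \<sigma> i w(2,3) \<open>w \<noteq> s\<close>] x(3,4) by simp
qed (simp add: label_less_irrefl)

text \<open>Competitors in the subtree of a sibling that \<open>\<pi>\<close> visits after \<open>\<sigma> ! i\<close> are ruled out by \<open>\<pi>\<close>;
  a sibling that \<open>\<pi>\<close> visits earlier does not beat \<open>\<sigma> ! i\<close> and, by \<open>\<pi>\<close> again, neither does its
  subtree.\<close>

lemma dfs_tree_lexdfs_step:
  assumes \<pi>: "tree_search_order \<pi>" "lexdfs_order V E s \<pi>" and \<sigma>: "dfs_order V TE s \<sigma>"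
    and no_dom: "never_skips_dominating_sibling \<sigma>"
    and i: "0 < i" "i < length \<sigma>" and w: "w \<in> V" "w \<notin> set (take i \<sigma>)"
  shows "(lex_label E s \<sigma> i (\<sigma> ! i), lex_label E s \<sigma> i w) \<notin> label_less"
proof -
  have \<omega>: "tree_search_order \<sigma>" using dfs_order_tree_search_order[OF \<sigma>] .
  note c = tree_search_order_nth[OF \<omega> i]
  let ?c = "\<sigma> ! i" and ?p = "par (\<sigma> ! i)" and ?L = "lex_label E s \<sigma> i"
  have "w \<noteq> s" using w(2) c(4) by blast
  note compare = dfs_tree_label_less_iff_dominates[OF \<sigma> i]
  show ?thesis
  proof (cases "(?p, w) \<in> arcs\<^sup>+")
    case False
    then show ?thesis
      using dfs_tree_dominates_outside_subtree[OF \<sigma> i w(2)] compare[OF c(1,3,2) w \<open>w \<noteq> s\<close>]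
        label_less_asym by blast
  next
    case True
    then obtain d where d: "(?p, d) \<in> arcs" "(d, w) \<in> arcs\<^sup>*" by (blast dest: tranclD)
    have "par d = ?p" "d \<in> V" "d \<noteq> s" using d(1) by (auto simp: arcs_iff)
    have "d \<notin> set (take i \<sigma>)" using dfs_tree_unvisited_child[OF \<sigma> i(2) d w(2)] .
    obtain k1 k2 where k: "k1 < length \<pi>" "\<pi> ! k1 = ?c" "k2 < length \<pi>" "\<pi> ! k2 = d"
      using tree_search_order_index[OF \<pi>(1)] c(1) \<open>d \<in> V\<close> by meson
    note subtree = dfs_tree_sibling_subtree_label[OF \<pi> \<sigma> i _ _ _ _ k(3,4) _ \<open>par d = ?p\<close> d(2) w]
    show ?thesis
    proof (cases "k1 \<le> k2")
      case True
      then show ?thesis using subtree[OF k(1,2) refl c(3)] by simp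
    next
      case False
      then have "d \<noteq> ?c" using k nth_eq_iff_index_eq[OF tree_search_orderD(1)[OF \<pi>(1)]] by fastforce
      then have "\<not> dominates d ?c ?p"
        using no_dom i \<open>d \<in> V\<close> \<open>par d = ?p\<close> \<open>d \<notin> set (take i \<sigma>)\<close>
        unfolding never_skips_dominating_sibling_def by blast
      then have "(?L ?c, ?L d) \<notin> label_less"
        using compare[OF \<open>d \<in> V\<close> \<open>d \<notin> set (take i \<sigma>)\<close> \<open>d \<noteq> s\<close> c(1,3,2)] by simp
      moreover have "(?L d, ?L w) \<notin> label_less"
        using subtree[OF k(3,4) \<open>par d = ?p\<close> \<open>d \<notin> set (take i \<sigma>)\<close> order_refl] by simp
      ultimately show ?thesis using label_not_less_trans by blast
    qed
  qed
qed

lemma dfs_tree_lexdfs: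
  assumes \<pi>: "tree_search_order \<pi>" "lexdfs_order V E s \<pi>" and \<sigma>: "dfs_order V TE s \<sigma>"
    and "never_skips_dominating_sibling \<sigma>"
  shows "lexdfs_order V E s \<sigma>"
proof -
  have "(lex_label E s \<sigma> i (\<sigma> ! i), lex_label E s \<sigma> i w) \<notin> label_less"
    if "i < length \<sigma>" "w \<in> V - set (take i \<sigma>)" for i w
  proof (cases "i = 0")
    case True
    have "\<sigma> ! 0 = s" using tree_search_orderD(4)[OF dfs_order_tree_search_order[OF \<sigma>]] .
    then show ?thesis using True by (simp add: lex_label_def)
  next
    case False
    then show ?thesis using dfs_tree_lexdfs_step[OF assms, of i w] that by blast
  qed
  moreover have "is_vorder V \<sigma>" using \<sigma> unfolding dfs_order_def by blast
  ultimately show ?thesis unfolding lexdfs_order_def by blast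
qed

section \<open>The order of siblings produced by Ordering\<close>

lemma rev_search_order_refining_set:
  assumes "tree_search_order (rev \<beta>)"
  shows "E v x \<and> prec \<beta> x v \<longleftrightarrow> E v x \<and> (v, x) \<in> arcs\<^sup>+"
proof -
  have "prec \<beta> x v \<longleftrightarrow> prec (rev \<beta>) v x" by (simp add: prec_rev)
  moreover have "prec (rev \<beta>) v x" if "(v, x) \<in> arcs\<^sup>+"
    using tree_search_order_prec[OF assms that] .
  moreover have "\<not> prec (rev \<beta>) v x" if "(x, v) \<in> arcs\<^sup>+"
    using prec_asym[OF tree_search_orderD(1)[OF assms] tree_search_order_prec[OF assms that]] .
  ultimately show ?thesis using edge_ancestor by blast
qed

lemma dominates_class_index_less:
  assumes \<beta>: "tree_search_order (rev \<beta>)"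
    and c: "c \<in> V" "c \<noteq> s" "par c = p" and d: "d \<in> V" "d \<noteq> s" "par d = p"
    and "dominates d c p"
  shows "class_index (ordering_classes V E \<beta>) d < class_index (ordering_classes V E \<beta>) c"
proof -
  let ?S = "\<lambda>v. {w. E v w \<and> prec \<beta> w v}"
  have member_iff: "z \<in> ?S v \<longleftrightarrow> E v z \<and> (v, z) \<in> arcs\<^sup>+" for v z
    using rev_search_order_refining_set[OF \<beta>] by simp
  have sibling_iff: "z \<in> ?S v \<longleftrightarrow> E v z \<and> (v, p) \<in> arcs\<^sup>*" if "z \<in> {c, d}" for v z
    using member_iff arcs_trancl_iff_par c d that by auto
  obtain u where u: "(u, p) \<in> arcs\<^sup>*" "E u d" "\<not> E u c"
    and agree: "\<forall>u'. (u', p) \<in> arcs\<^sup>* \<and> (u, u') \<in> arcs\<^sup>+ \<longrightarrow> (E u' d \<longleftrightarrow> E u' c)"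
    using assms(8) unfolding dominates_def by blast
  have "u \<in> set \<beta>"
    using arcs_rtrancl_in_V[OF u(1)] par_in_V c tree_search_orderD(2)[OF \<beta>] by auto
  then obtain k where k: "k < length \<beta>" "\<beta> ! k = u" by (metis in_set_conv_nth)
  have dist: "distinct \<beta>" using tree_search_orderD(1)[OF \<beta>] by simp
  have "d \<in> ?S (\<beta> ! m) \<longleftrightarrow> c \<in> ?S (\<beta> ! m)" if m: "m < k" for m
  proof (rule ccontr)
    assume differ: "\<not> (d \<in> ?S (\<beta> ! m) \<longleftrightarrow> c \<in> ?S (\<beta> ! m))"
    then have path: "(\<beta> ! m, p) \<in> arcs\<^sup>*" using sibling_iff by blast
    then have "E (\<beta> ! m) d \<noteq> E (\<beta> ! m) c" using differ sibling_iff by blast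
    then consider "\<beta> ! m = u" | "(\<beta> ! m, u) \<in> arcs\<^sup>+"
      using ancestors_comparable[OF path u(1)] agree path by blast
    then show False
    proof cases
      case 1
      then show False using nth_eq_iff_index_eq[OF dist] m k by fastforce
    next
      case 2
      then have "prec \<beta> (\<beta> ! k) (\<beta> ! m)"
        using tree_search_order_prec[OF \<beta>] k(2) by (simp add: prec_rev)
      then show False using prec_nth_iff[OF dist k(1)] m k(1) by simp
    qed
  qed
  moreover have "d \<in> ?S u" "c \<notin> ?S u" using sibling_iff u by auto
  ultimately have "split_before ?S \<beta> d c"
    unfolding split_before_def using k by (intro exI[of _ k]) auto
  then show ?thesis
    unfolding ordering_classes_def class_index_refine_foldl_less_iff[OF d(1) c(1)] .
qed

lemma class_index_less_root:
  assumes \<beta>: "tree_search_order (rev \<beta>)" and x: "x \<in> V" "x \<noteq> s"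
  shows "class_index (ordering_classes V E \<beta>) x < class_index (ordering_classes V E \<beta>) s"
proof -
  let ?S = "\<lambda>v. {w. E v w \<and> prec \<beta> w v}"
  have member_iff: "z \<in> ?S v \<longleftrightarrow> E v z \<and> (v, z) \<in> arcs\<^sup>+" for v z
    using rev_search_order_refining_set[OF \<beta>] by simp
  have root: "s \<notin> ?S v" for v
    using member_iff[of s v] arcs_tranclD[of v s] by blast
  have "par x \<in> set \<beta>" using par_in_V x tree_search_orderD(2)[OF \<beta>] by simp
  then obtain k0 where k0: "k0 < length \<beta>" "\<beta> ! k0 = par x" by (metis in_set_conv_nth)
  have "(par x, x) \<in> arcs\<^sup>+" using x by (simp add: arcs_iff r_into_trancl')
  then have "x \<in> ?S (par x)" using member_iff par_edge[OF x] by simp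
  then have "\<exists>k. k < length \<beta> \<and> x \<in> ?S (\<beta> ! k)" using k0 by metis
  then obtain k where k: "k < length \<beta>" "x \<in> ?S (\<beta> ! k)"
    and least: "\<forall>m<k. \<not> (m < length \<beta> \<and> x \<in> ?S (\<beta> ! m))"
    unfolding exists_least_iff[of "\<lambda>k. k < length \<beta> \<and> x \<in> ?S (\<beta> ! k)"] by blast
  have "split_before ?S \<beta> x s"
    unfolding split_before_def using k least root by (intro exI[of _ k]) auto
  then show ?thesis
    unfolding ordering_classes_def class_index_refine_foldl_less_iff[OF x(1) root_in_V] .
qed

lemma class_separates_root:
  assumes "tree_search_order (rev \<beta>)" "x \<in> V" "x \<noteq> s" "Q \<in> set (ordering_classes V E \<beta>)" "x \<in> Q"
  shows "s \<notin> Q"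
proof
  assume "s \<in> Q"
  let ?Qs = "ordering_classes V E \<beta>"
  obtain j where j: "j < length ?Qs" "?Qs ! j = Q" using assms(4) by (auto simp: in_set_conv_nth)
  have count: "class_count ?Qs z \<le> 1" for z
    unfolding ordering_classes_def class_count_refine_foldl by simp
  have "class_index ?Qs x = j" "class_index ?Qs s = j"
    using class_index_nth[OF count j(1)] j(2) assms(5) \<open>s \<in> Q\<close> by simp_all
  then show False using class_index_less_root[OF assms(1-3)] by simp
qed

lemma ordering_seq_prec_class_index:
  assumes \<beta>: "tree_search_order (rev \<beta>)" and c: "c \<in> V" "c \<noteq> s" and d: "d \<in> V" "d \<noteq> s"
    and "prec (ordering_seq V E s \<rho> \<beta>) c d"
  shows "class_index (ordering_classes V E \<beta>) c \<le> class_index (ordering_classes V E \<beta>) d"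
proof (rule ccontr)
  let ?Qs = "ordering_classes V E \<beta>"
  let ?A = "filter (\<lambda>Q. s \<in> Q) ?Qs" and ?B = "filter (\<lambda>Q. s \<notin> Q) ?Qs"
  assume "\<not> ?thesis"
  then have "class_index ?B d < class_index ?B c"
    using class_index_filter_less[of ?Qs d "\<lambda>Q. s \<notin> Q" c] class_separates_root[OF \<beta> d] by simp
  moreover have "class_count (?A @ ?B) d \<le> 1"
    unfolding class_count_filter_append ordering_classes_def class_count_refine_foldl by simp
  then have "class_index (?A @ ?B) c \<le> class_index (?A @ ?B) d"
    using assms(6) prec_concat_class_index[of "\<lambda>Q. filter (\<lambda>x. x \<in> Q) (rev \<rho>)" "?A @ ?B" c d]
    unfolding ordering_seq_def Let_def by auto
  moreover have "class_index (?A @ ?B) z = length ?A + class_index ?B z" if "z \<in> V" "z \<noteq> s" for z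
  proof -
    have "z \<notin> \<Union>(set ?A)" using class_separates_root[OF \<beta> that] by auto
    then show ?thesis by (simp add: class_index_append)
  qed
  ultimately show False using c d by fastforce
qed

lemma dfs_plus_prec_sibling:
  assumes "dfs_plus V TE \<tau> \<sigma>" "last \<tau> = s" and i: "0 < i" "i < length \<sigma>"
    and d: "par d = par (\<sigma> ! i)" "d \<in> V" "d \<noteq> s" "d \<notin> set (take i \<sigma>)" "d \<noteq> \<sigma> ! i"
  shows "prec \<tau> d (\<sigma> ! i)"
proof -
  have \<sigma>: "dfs_order V TE s \<sigma>" using assms(1,2) unfolding dfs_plus_def by simp
  obtain j where j: "j < i" "TE (\<sigma> ! j) (\<sigma> ! i)"
    "\<forall>k. j < k \<and> k < i \<longrightarrow> {w. TE (\<sigma> ! k) w} \<subseteq> set (take i \<sigma>)"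
    using \<sigma> i unfolding dfs_order_def by blast
  have "\<sigma> ! j = par (\<sigma> ! i)"
    using tree_search_order_parent[OF dfs_order_tree_search_order[OF \<sigma>] j(1) i(2) j(2)] by simp
  then have "TE (\<sigma> ! j) d" using TE_iff d by simp
  then have "d = \<sigma> ! i \<or> prec \<tau> d (\<sigma> ! i)"
    using assms(1) i j d(4) unfolding dfs_plus_def by blast
  then show ?thesis using d(5) by simp
qed

lemma ordering_output_never_skips_dominating_sibling:
  assumes \<beta>: "tree_search_order (rev \<beta>)" and \<sigma>: "dfs_plus V TE (rev (ordering_seq V E s \<rho> \<beta>)) \<sigma>"
    and last: "last (rev (ordering_seq V E s \<rho> \<beta>)) = s"
  shows "never_skips_dominating_sibling \<sigma>"
  unfolding never_skips_dominating_sibling_def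
proof (intro allI impI notI)
  fix i d
  assume "0 < i \<and> i < length \<sigma> \<and> d \<in> V \<and> par d = par (\<sigma> ! i) \<and> d \<notin> set (take i \<sigma>) \<and> d \<noteq> \<sigma> ! i"
    and dom: "dominates d (\<sigma> ! i) (par (\<sigma> ! i))"
  then have i: "0 < i" "i < length \<sigma>" and d: "d \<in> V" "par d = par (\<sigma> ! i)" "d \<notin> set (take i \<sigma>)" "d \<noteq> \<sigma> ! i"
    by auto
  have \<omega>: "tree_search_order \<sigma>"
    using \<sigma> last dfs_order_tree_search_order unfolding dfs_plus_def by simp
  note c = tree_search_order_nth[OF \<omega> i]
  have "d \<noteq> s" using d(3) c(4) by blast
  have "class_index (ordering_classes V E \<beta>) d < class_index (ordering_classes V E \<beta>) (\<sigma> ! i)"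
    using dominates_class_index_less[OF \<beta> c(1,2) refl d(1) \<open>d \<noteq> s\<close> d(2) dom] .
  moreover have "prec (ordering_seq V E s \<rho> \<beta>) (\<sigma> ! i) d"
    using dfs_plus_prec_sibling[OF \<sigma> last i d(2,1) \<open>d \<noteq> s\<close> d(3,4)] by (simp add: prec_rev)
  then have "class_index (ordering_classes V E \<beta>) (\<sigma> ! i) \<le> class_index (ordering_classes V E \<beta>) d"
    using ordering_seq_prec_class_index[OF \<beta> c(1,2) d(1) \<open>d \<noteq> s\<close>] by blast
  ultimately show False by simp
qed

lemma tree_search_order_lparent:
  assumes \<omega>: "tree_search_order \<omega>" and i: "0 < i" "i < length \<omega>"
  shows "\<exists>j<i. E (\<omega> ! i) (\<omega> ! j)" "\<omega> ! lparent E \<omega> i = par (\<omega> ! i)"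
proof -
  let ?c = "\<omega> ! i" and ?l = "lparent E \<omega> i"
  have c: "?c \<in> V" "?c \<noteq> s"
    using tree_search_orderD(2)[OF \<omega>] nth_mem[OF i(2)] tree_search_order_nth_neq_root[OF \<omega> i] by auto
  obtain jp where jp: "jp < length \<omega>" "\<omega> ! jp = par ?c"
    using tree_search_order_index[OF \<omega> par_in_V[OF c]] by blast
  have "(par ?c, ?c) \<in> arcs\<^sup>+" using c by (simp add: arcs_iff r_into_trancl')
  then have "jp < i" using tree_search_order_ancestor_before[OF \<omega> jp(1) i(2)] jp(2) by simp
  moreover have "E ?c (\<omega> ! jp)" using edge_sym[OF par_edge[OF c]] jp(2) by simp
  ultimately show "\<exists>j<i. E (\<omega> ! i) (\<omega> ! j)" by blast
  note l = lparent_greatest[of jp i E \<omega>, OF \<open>jp < i\<close> \<open>E ?c (\<omega> ! jp)\<close>]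
  have l_len: "?l < length \<omega>" using l(1) i(2) by simp
  have "(?c, \<omega> ! ?l) \<notin> arcs\<^sup>+"
    using tree_search_order_ancestor_before[OF \<omega> i(2) l_len] l(1) by linarith
  then have "(\<omega> ! ?l, ?c) \<in> arcs\<^sup>+" using edge_ancestor[OF l(2)] by blast
  then have "(\<omega> ! ?l, par ?c) \<in> arcs\<^sup>*" using arcs_tranclD by blast
  then consider "\<omega> ! ?l = par ?c" | "(\<omega> ! ?l, \<omega> ! jp) \<in> arcs\<^sup>+"
    using jp(2) by (auto dest: rtranclD)
  then show "\<omega> ! ?l = par ?c"
  proof cases
    case 2
    then have "?l < jp" using tree_search_order_ancestor_before[OF \<omega> l_len jp(1)] by blast
    then show ?thesis using l(3) by simp
  qed
qed

lemma ltree_edge_tree_search_order: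
  assumes \<omega>: "tree_search_order \<omega>"
  shows "ltree_edge E \<omega> = TE"
proof (intro ext)
  fix x y
  have "\<omega> \<noteq> []" using tree_search_orderD(3)[OF \<omega>] by auto
  note parent = ltree_edge_iff_parent[OF tree_search_orderD(1)[OF \<omega>] this
      tree_search_order_lparent(1)[OF \<omega>] tree_search_order_lparent(2)[OF \<omega>]]
  show "ltree_edge E \<omega> x y = TE x y"
    using parent[of x y] tree_search_orderD(2,4)[OF \<omega>] TE_iff[of x y] by auto
qed

lemma exists_child_leaving:
  assumes "v \<in> V" "v \<notin> C" "s \<in> C"
  shows "\<exists>w\<in>V. w \<notin> C \<and> w \<noteq> s \<and> par w \<in> C"
  using assms
proof (induction "rank v" arbitrary: v rule: less_induct)
  case less
  then have "v \<noteq> s" by blast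
  show ?case
  proof (cases "par v \<in> C")
    case True
    then show ?thesis using less.prems \<open>v \<noteq> s\<close> by blast
  next
    case False
    then show ?thesis
      using less.hyps[OF rank_par par_in_V] less.prems \<open>v \<noteq> s\<close> by blast
  qed
qed

text \<open>Otherwise \<open>\<pi> ! i\<close> has the empty label, while some unnumbered vertex has a numbered tree
  parent and hence a nonempty label.\<close>

lemma lexdfs_order_earlier_nbr:
  assumes \<pi>: "lexdfs_order V E s \<pi>" and i: "0 < i" "i < length \<pi>"
  shows "\<exists>j<i. E (\<pi> ! i) (\<pi> ! j)"
proof (rule ccontr)
  assume none: "\<not> ?thesis"
  have dist: "distinct \<pi>" and "set \<pi> = V" using \<pi> unfolding lexdfs_order_def is_vorder_def by auto
  have "\<pi> ! 0 = s" using lexdfs_order_nth_0[OF \<pi> root_in_V] by blast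
  then have "s \<in> set (take i \<pi>)" unfolding in_set_take_iff using i by (intro exI[of _ 0]) auto
  moreover have "\<pi> ! i \<in> V" "\<pi> ! i \<notin> set (take i \<pi>)"
    using \<open>set \<pi> = V\<close> nth_mem[OF i(2)] nth_notin_set_take[OF dist order_refl i(2)] by auto
  ultimately obtain w where w: "w \<in> V" "w \<notin> set (take i \<pi>)" "w \<noteq> s" "par w \<in> set (take i \<pi>)"
    using exists_child_leaving by blast
  then obtain k where "k < i" "k < length \<pi>" "\<pi> ! k = par w" by (auto simp: in_set_take_iff)
  then have "filter (\<lambda>k. E (\<pi> ! k) w) [0..<i] \<noteq> []"
    using par_edge[OF w(1,3)] by (auto simp: filter_empty_conv intro!: bexI[of _ k])
  then have "([], lex_label E s \<pi> i w) \<in> label_less"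
    using w(3) by (cases "lex_label E s \<pi> i w") (auto simp: lex_label_def)
  moreover have "lex_label E s \<pi> i (\<pi> ! i) = []"
  proof -
    have "0 < length \<pi>" using i by linarith
    then have "\<pi> ! i \<noteq> \<pi> ! 0" using nth_eq_iff_index_eq[OF dist i(2)] i(1) by blast
    moreover have "\<not> E (\<pi> ! j) (\<pi> ! i)" if "j < i" for j using none edge_sym that by blast
    ultimately show ?thesis using \<open>\<pi> ! 0 = s\<close> by (simp add: lex_label_def filter_empty_conv)
  qed
  ultimately show False using \<pi> i w(1,2) unfolding lexdfs_order_def by auto
qed

lemma lexdfs_ltree_tree_search_order:
  assumes \<pi>: "lexdfs_order V E s \<pi>" and lt: "ltree_edge E \<pi> = TE"
  shows "tree_search_order \<pi>"
proof -
  have "\<exists>j<i. TE (\<pi> ! j) (\<pi> ! i)" if i: "0 < i" "i < length \<pi>" for i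
  proof -
    obtain j where j: "j < i" "E (\<pi> ! i) (\<pi> ! j)" using lexdfs_order_earlier_nbr[OF \<pi> i] by blast
    have "TE (\<pi> ! i) (\<pi> ! lparent E \<pi> i)"
      unfolding lt[symmetric] ltree_edge_iff_lparent using i j by blast
    then show ?thesis using lparent_greatest(1)[of j i E \<pi>, OF j] TE_sym by blast
  qed
  moreover have "\<pi> \<noteq> [] \<and> \<pi> ! 0 = s" using lexdfs_order_nth_0[OF \<pi> root_in_V] .
  ultimately show ?thesis
    using \<pi> unfolding tree_search_order_def lexdfs_order_def by (simp add: hd_conv_nth)
qed

lemma ordering_output_lexdfs_iff:
  assumes "\<rho> \<noteq> []" "last \<rho> = s" "ordering_output V E TE s \<rho> \<sigma>"
  shows "is_Ltree_LexDFS V E TE s \<longleftrightarrow> (\<exists>t\<in>V. lexdfs_order V E t \<sigma>)"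
proof -
  obtain \<beta> where "bfs_order V TE s (rev \<beta>)" and \<sigma>: "dfs_plus V TE (rev (ordering_seq V E s \<rho> \<beta>)) \<sigma>"
    using assms(3) unfolding ordering_output_def by blast
  then have \<beta>: "tree_search_order (rev \<beta>)" unfolding bfs_order_def tree_search_order_def by blast
  have last: "last (rev (ordering_seq V E s \<rho> \<beta>)) = s"
    using hd_ordering_seq[OF root_in_V assms(1,2)] by (simp add: last_rev)
  then have "dfs_order V TE s \<sigma>" using \<sigma> unfolding dfs_plus_def by simp
  then have \<sigma>_tree: "tree_search_order \<sigma>" by (rule dfs_order_tree_search_order)
  show ?thesis
  proof
    assume "is_Ltree_LexDFS V E TE s"
    then obtain \<pi> where \<pi>: "lexdfs_order V E s \<pi>" "ltree_edge E \<pi> = TE"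
      unfolding is_Ltree_LexDFS_def by blast
    have "lexdfs_order V E s \<sigma>"
      using dfs_tree_lexdfs[OF lexdfs_ltree_tree_search_order[OF \<pi>] \<pi>(1) \<open>dfs_order V TE s \<sigma>\<close>]
        ordering_output_never_skips_dominating_sibling[OF \<beta> \<sigma> last] by blast
    then show "\<exists>t\<in>V. lexdfs_order V E t \<sigma>" using root_in_V by blast
  next
    assume "\<exists>t\<in>V. lexdfs_order V E t \<sigma>"
    then obtain t where "t \<in> V" "lexdfs_order V E t \<sigma>" by blast
    moreover have "t = s"
      using lexdfs_order_nth_0[OF calculation(2,1)] tree_search_orderD(4)[OF \<sigma>_tree] by simp
    ultimately have "lexdfs_order V E s \<sigma>" by simp
    then show "is_Ltree_LexDFS V E TE s"
      unfolding is_Ltree_LexDFS_def using ltree_edge_tree_search_order[OF \<sigma>_tree] by blast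
  qed
qed

end

lemma dfs_ltree_normal_tree:
  assumes G: "graph V E" and \<pi>: "dfs_order V E s \<pi>" and T: "ltree_edge E \<pi> = TE"
  shows "\<exists>par rank. normal_tree V E TE s par rank"
proof -
  have sym: "\<And>x y. E x y \<Longrightarrow> E y x" using G unfolding graph_def by blast
  have dist: "distinct \<pi>" and set: "set \<pi> = V" and "\<pi> \<noteq> []" and root: "\<pi> ! 0 = s"
    using \<pi> hd_conv_nth[of \<pi>] unfolding dfs_order_def is_vorder_def by auto
  define pos where "pos = the_inv_into {..<length \<pi>} ((!) \<pi>)"
  define par where "par v = \<pi> ! lparent E \<pi> (pos v)" for v
  note pos_nth = the_inv_into_nth(1)[OF dist, folded pos_def]
  note nth_pos = the_inv_into_nth(2)[OF dist, folded pos_def, unfolded set]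
  have par: "par (\<pi> ! i) = \<pi> ! lparent E \<pi> i" if "i < length \<pi>" for i
    unfolding par_def pos_nth[OF that] ..
  have lp: "lparent E \<pi> (pos v) < pos v \<and> E v (par v)" if v: "v \<in> V" "v \<noteq> s" for v
  proof -
    have "0 < pos v" using nth_pos[OF v(1)] v(2) root by (cases "pos v") auto
    then obtain j where "j < pos v" "E (\<pi> ! pos v) (\<pi> ! j)"
      using dfs_order_earlier_nbr[OF \<pi> sym] nth_pos[OF v(1)] by blast
    then show ?thesis using lparent_greatest(1,2)[of j "pos v" E \<pi>] nth_pos[OF v(1)] unfolding par_def by simp
  qed
  have "normal_tree V E TE s par pos"
  proof
    show "E x y \<Longrightarrow> x \<in> V \<and> y \<in> V \<and> x \<noteq> y \<and> E y x" for x y using G unfolding graph_def by blast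
    show "s \<in> V" using root set \<open>\<pi> \<noteq> []\<close> nth_mem by fastforce
    show "par v \<in> V" "E (par v) v" "pos (par v) < pos v" if "v \<in> V" "v \<noteq> s" for v
      using lp[OF that] nth_pos[OF that(1)] sym[of v "par v"] pos_nth set nth_mem unfolding par_def by auto
    show "TE x y \<longleftrightarrow> (y \<in> V \<and> y \<noteq> s \<and> x = par y) \<or> (x \<in> V \<and> x \<noteq> s \<and> y = par x)" for x y
    proof -
      have "ltree_edge E \<pi> x y \<longleftrightarrow> (\<exists>v\<in>set \<pi>. v \<noteq> \<pi> ! 0 \<and> (x = v \<and> y = par v \<or> x = par v \<and> y = v))"
        by (rule ltree_edge_iff_parent[OF dist \<open>\<pi> \<noteq> []\<close>]) (use dfs_order_earlier_nbr[OF \<pi> sym] par in auto)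
      then show ?thesis using T set root by auto
    qed
    show "(x, y) \<in> (tree_arcs V s par)\<^sup>+ \<or> (y, x) \<in> (tree_arcs V s par)\<^sup>+" if "E x y" for x y
      using dfs_order_edge_ancestor[OF G \<pi> that] tree_arcs_lparent[OF dist \<open>\<pi> \<noteq> []\<close> set root par]
      by simp
  qed
  then show ?thesis by blast
qed

theorem theorem7:
  fixes V :: "'a set" and E TE :: "'a \<Rightarrow> 'a \<Rightarrow> bool" and s :: 'a and \<rho> \<sigma> :: "'a list"
  assumes "graph V E" and "connected V E" and "s \<in> V"
    and "is_Ltree_DFS V E TE s"
    and "is_vorder V \<rho>" and "\<rho> \<noteq> []" and "last \<rho> = s"
    and "ordering_output V E TE s \<rho> \<sigma>"
  shows "is_Ltree_LexDFS V E TE s \<longleftrightarrow> (\<exists>t\<in>V. lexdfs_order V E t \<sigma>)"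
proof -
  \<comment> \<open>Connectivity is implied by the DFS order behind \<open>TE\<close>, and only the last vertex of \<open>\<rho>\<close> matters.\<close>
  obtain \<pi> where "dfs_order V E s \<pi>" "ltree_edge E \<pi> = TE"
    using assms(4) unfolding is_Ltree_DFS_def by blast
  then obtain par rank where "normal_tree V E TE s par rank"
    using dfs_ltree_normal_tree[OF assms(1)] by blast
  then interpret normal_tree V E TE s par rank .
  show ?thesis using ordering_output_lexdfs_iff[OF assms(6-8)] .
qed

end
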